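(* Let $n\ge 2$ be an integer, $\rho\in\mathbb{C}$, and let $K_n(\rho)=\left[\rho^{|j-k|}\right]_{j,k=1}^n$ (with the convention $\rho^0=1$, so $K_n(0)=I_n$). Then: (i) all entries of $K_n(\rho)$ are positive iff $\rho>0$; (ii) $K_n(\rho)$ is real symmetric iff $\rho\in\mathbb{R}$; (iii) $K_n(\rho)$ is Hermitian iff $\rho\in\mathbb{R}$; (iv) the symbol of the corresponding Laurent matrix, i.e. the Fourier series $\sum_{k=-\infty}^{\infty}\rho^{|k|}e^{ik\theta}$ ($\theta\in\mathbb{R}$), is a well-defined and bounded function of $\theta$ iff $|\rho|<1$; (v) $K_n(\rho)$ is positive definite iff $-1<\rho<1$, and $K_n(\rho)$ is positive semidefinite iff $-1\le\rho\le 1$; (vi) $K_n(\rho)$ is normal iff ($\rho\in\mathbb{R}$ or $n=2$); (vii) $K_n(\rho)$ is a Green's matrix iff $\rho\in\mathbb{R}\setminus\{0\}$; (viii) $K_n(\rho)$ is totally positive iff $0\le\rho\le 1$; (ix) $K_n(\rho)$ is oscillatory iff $0<\rho<1$.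
   Context: A complex $n\times n$ matrix $A$ is positive definite (positive semidefinite) if $x^*Ax>0$ ($x^*Ax\ge 0$) for all nonzero $x\in\mathbb{C}^n$. A real $n\times n$ matrix $A=[A_{jk}]$ is a Green's matrix if there exist real numbers $\alpha_1,\dots,\alpha_n,\beta_1,\dots,\beta_n$ with $A_{jk}=\alpha_j\beta_k$ for $1\le j\le k\le n$ and $A_{jk}=\alpha_k\beta_j$ for $1\le k\le j\le n$. A (real) matrix is totally positive if every minor is nonnegative. A totally positive square matrix is oscillatory if some positive integer power of it has all minors strictly positive. *)

theory Defs
  imports Complex_Main "Jordan_Normal_Form.Determinant" "Jordan_Normal_Form.DL_Submatrix"
begin

(* Indices are 0-based: entry (j,k) with j,k < n corresponds to (j+1,k+1) in the paper. *)

definition kms_mat :: "nat \<Rightarrow> complex \<Rightarrow> complex mat" where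
  "kms_mat n \<rho> = mat n n (\<lambda>(j,k). \<rho> ^ (if j \<le> k then k - j else j - k))"
  (* note 0 ^ 0 = 1 in Isabelle, matching the convention rho^0 = 1 *)

definition pos_c :: "complex \<Rightarrow> bool" where
  "pos_c z \<longleftrightarrow> z \<in> \<real> \<and> Re z > 0"

definition nonneg_c :: "complex \<Rightarrow> bool" where
  "nonneg_c z \<longleftrightarrow> z \<in> \<real> \<and> Re z \<ge> 0"

definition all_entries_positive :: "complex mat \<Rightarrow> bool" where
  "all_entries_positive A \<longleftrightarrow> (\<forall>j<dim_row A. \<forall>k<dim_col A. pos_c (A $$ (j,k)))"

definition real_mat :: "complex mat \<Rightarrow> bool" where
  "real_mat A \<longleftrightarrow> (\<forall>j<dim_row A. \<forall>k<dim_col A. A $$ (j,k) \<in> \<real>)"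

definition real_symmetric :: "complex mat \<Rightarrow> bool" where
  "real_symmetric A \<longleftrightarrow> real_mat A \<and> transpose_mat A = A"

definition adjoint_mat :: "complex mat \<Rightarrow> complex mat" where
  "adjoint_mat A = mat (dim_col A) (dim_row A) (\<lambda>(i,j). cnj (A $$ (j,i)))"

definition hermitian :: "complex mat \<Rightarrow> bool" where
  "hermitian A \<longleftrightarrow> adjoint_mat A = A"

definition normal_mat :: "complex mat \<Rightarrow> bool" where
  "normal_mat A \<longleftrightarrow> A * adjoint_mat A = adjoint_mat A * A"

definition quad_form :: "complex mat \<Rightarrow> complex vec \<Rightarrow> complex" where
  "quad_form A x = (\<Sum>j<dim_row A. \<Sum>k<dim_col A. cnj (x $ j) * A $$ (j,k) * x $ k)"

definition positive_definite :: "complex mat \<Rightarrow> bool" where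
  "positive_definite A \<longleftrightarrow> A \<in> carrier_mat (dim_row A) (dim_row A) \<and>
     (\<forall>x \<in> carrier_vec (dim_row A). x \<noteq> 0\<^sub>v (dim_row A) \<longrightarrow> pos_c (quad_form A x))"

definition positive_semidefinite :: "complex mat \<Rightarrow> bool" where
  "positive_semidefinite A \<longleftrightarrow> A \<in> carrier_mat (dim_row A) (dim_row A) \<and>
     (\<forall>x \<in> carrier_vec (dim_row A). x \<noteq> 0\<^sub>v (dim_row A) \<longrightarrow> nonneg_c (quad_form A x))"

definition greens_matrix :: "complex mat \<Rightarrow> bool" where
  "greens_matrix A \<longleftrightarrow> A \<in> carrier_mat (dim_row A) (dim_row A) \<and> real_mat A \<and>
     (\<exists>\<alpha> \<beta> :: nat \<Rightarrow> real. \<forall>j<dim_row A. \<forall>k<dim_row A.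
        (j \<le> k \<longrightarrow> A $$ (j,k) = complex_of_real (\<alpha> j * \<beta> k)) \<and>
        (k \<le> j \<longrightarrow> A $$ (j,k) = complex_of_real (\<alpha> k * \<beta> j)))"

definition all_minors :: "(complex \<Rightarrow> bool) \<Rightarrow> complex mat \<Rightarrow> bool" where
  "all_minors P A \<longleftrightarrow> (\<forall>I J. I \<subseteq> {..<dim_row A} \<longrightarrow> J \<subseteq> {..<dim_col A} \<longrightarrow>
      I \<noteq> {} \<longrightarrow> card I = card J \<longrightarrow> P (det (submatrix A I J)))"

definition totally_positive :: "complex mat \<Rightarrow> bool" where
  "totally_positive A \<longleftrightarrow> real_mat A \<and> all_minors nonneg_c A"

definition oscillatory :: "complex mat \<Rightarrow> bool" where
  "oscillatory A \<longleftrightarrow> A \<in> carrier_mat (dim_row A) (dim_row A) \<and> totally_positive A \<and>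
     (\<exists>m>0. all_minors pos_c (A ^\<^sub>m m))"

definition symbol_partial :: "complex \<Rightarrow> real \<Rightarrow> nat \<Rightarrow> complex" where
  "symbol_partial \<rho> \<theta> N = (\<Sum>k = - int N..int N. \<rho> ^ nat \<bar>k\<bar> * exp (\<i> * of_int k * of_real \<theta>))"

definition symbol_well_defined_bounded :: "complex \<Rightarrow> bool" where
  "symbol_well_defined_bounded \<rho> \<longleftrightarrow>
     (\<forall>\<theta>. convergent (symbol_partial \<rho> \<theta>)) \<and>
     (\<exists>B. \<forall>\<theta>. norm (lim (symbol_partial \<rho> \<theta>)) \<le> B)"

end

theory Submission
  imports Defs
begin

text \<open>
  Since \<open>K\<^sub>n(\<rho>)\<close> has the entry \<open>\<rho>\<close> at position \<open>(0, 1)\<close>, the necessity parts of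
  (i)--(iii) and (vii)--(ix) start from that entry; a Green's representation for real \<open>\<rho> \<noteq> 0\<close>
  comes from \<open>\<rho> ^ (k - j) = \<rho> ^ - j * \<rho> ^ k\<close>. The symbol is \<open>1\<close> plus the two geometric series
  with ratios \<open>\<rho> * exp (\<i> * \<theta>)\<close> and \<open>\<rho> * exp (- \<i> * \<theta>)\<close>. For \<open>n \<ge> 3\<close> the \<open>(0, 1)\<close> entry
  of \<open>K K\<^sup>* - K\<^sup>* K\<close> is \<open>(\<rho> - cnj \<rho>) * (\<Sum>k=1..n-2. |\<rho>| ^ (2 * k))\<close>, so normality forces \<open>\<rho>\<close>
  to be real.

  For real \<open>r\<close> the quadratic form of \<open>K\<^sub>n(r)\<close> is
  \<open>|Y\<^sub>n\<^sub>-\<^sub>1|\<^sup>2 + (1 - r\<^sup>2) * (|Y\<^sub>0|\<^sup>2 + \<dots> + |Y\<^sub>n\<^sub>-\<^sub>2|\<^sup>2)\<close> with \<open>Y\<^sub>m = \<Sum>j\<le>m. r ^ (m - j) * y\<^sub>j\<close>,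
  which gives (v) together with the test vectors \<open>e\<^sub>0 \<plusminus> e\<^sub>1\<close>.

  A minor of \<open>K\<^sub>n(r)\<close> with increasing row indices \<open>i\<close> and column indices \<open>j\<close> is computed by
  subtracting \<open>r ^ (i\<^sub>1 - i\<^sub>0)\<close> times its second row from its first one: this leaves the first row
  with the single entry \<open>r ^ |i\<^sub>0 - j\<^sub>0| * (1 - r ^ (2 * (min i\<^sub>1 j\<^sub>1 - max i\<^sub>0 j\<^sub>0)))\<close>, or with
  none if \<open>max i\<^sub>0 j\<^sub>0 > min i\<^sub>1 j\<^sub>1\<close>, so every minor is a product of such factors. Thus all minors are nonnegative for
  \<open>0 \<le> r \<le> 1\<close>, and the minors with interlacing index sequences are positive for \<open>0 < r < 1\<close>;
  Cauchy--Binet then makes every minor of a high power of \<open>K\<^sub>n(r)\<close> positive. Conversely, the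
  minors \<open>r\<close> and \<open>1 - r\<^sup>2\<close> force \<open>0 \<le> r \<le> 1\<close>, while \<open>K\<^sub>n(0) = I\<close> and the all-ones matrix
  \<open>K\<^sub>n(1)\<close> are not oscillatory.
\<close>

section \<open>Cauchy--Binet\<close>

definition inc_maps :: "nat \<Rightarrow> nat \<Rightarrow> (nat \<Rightarrow> nat) set" where
  "inc_maps p n = {\<kappa> \<in> {..<p} \<rightarrow>\<^sub>E {..<n}. strict_mono_on {..<p} \<kappa>}"

lemma finite_inc_maps: "finite (inc_maps p n)"
  unfolding inc_maps_def by (rule finite_subset[of _ "{..<p} \<rightarrow>\<^sub>E {..<n}"]) (auto intro: finite_PiE)

lemma inc_mapsD:
  assumes "\<kappa> \<in> inc_maps p n"
  shows "strict_mono_on {..<p} \<kappa>" "\<kappa> ` {..<p} \<subseteq> {..<n}" "\<kappa> \<in> extensional {..<p}"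
  using assms unfolding inc_maps_def by (auto simp: PiE_iff)

lemma restrict_in_inc_maps:
  assumes "strict_mono_on {..<p} \<kappa>" "\<kappa> ` {..<p} \<subseteq> {..<n}"
  shows "restrict \<kappa> {..<p} \<in> inc_maps p n"
  using assms unfolding inc_maps_def strict_mono_on_def by auto

lemma sorted_list_of_set_strict_mono_image:
  fixes \<kappa> :: "nat \<Rightarrow> 'a::linorder"
  assumes "strict_mono_on {..<p} \<kappa>"
  shows "sorted_list_of_set (\<kappa> ` {..<p}) = map \<kappa> [0..<p]"
proof -
  have "sorted_wrt (<) (map \<kappa> [0..<p])"
    using assms unfolding sorted_wrt_iff_nth_less strict_mono_on_def by auto
  then have "sorted (map \<kappa> [0..<p])" "distinct (map \<kappa> [0..<p])"
    by (auto simp: strict_sorted_iff)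
  then have "sorted_list_of_set (set (map \<kappa> [0..<p])) = map \<kappa> [0..<p]"
    by (rule sorted_list_of_set.idem_if_sorted_distinct)
  then show ?thesis
    by (simp add: atLeast0LessThan)
qed

lemma inc_maps_image_eqD:
  assumes "\<kappa> \<in> inc_maps p n" "\<kappa>' \<in> inc_maps p n" "\<kappa> ` {..<p} = \<kappa>' ` {..<p}"
  shows "\<kappa> = \<kappa>'"
proof (rule extensionalityI[OF inc_mapsD(3)[OF assms(1)] inc_mapsD(3)[OF assms(2)]])
  have "map \<kappa> [0..<p] = map \<kappa>' [0..<p]"
    using assms inc_mapsD(1) sorted_list_of_set_strict_mono_image by metis
  then show "\<kappa> a = \<kappa>' a" if "a \<in> {..<p}" for a
    using that by (simp add: map_eq_conv)
qed

lemma inc_map_enumerating: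
  assumes "S \<subseteq> {..<n}" "card S = p"
  obtains \<kappa> where "\<kappa> \<in> inc_maps p n" "\<kappa> ` {..<p} = S"
proof -
  define L where "L = sorted_list_of_set S"
  have "finite S"
    using assms(1) finite_subset by blast
  then have L: "length L = p" "set L = S" "sorted_wrt (<) L"
    unfolding L_def using assms(2) by auto
  then have "strict_mono_on {..<p} (\<lambda>a. L ! a)"
    unfolding strict_mono_on_def sorted_wrt_iff_nth_less by auto
  moreover have "(\<lambda>a. L ! a) ` {..<p} = S"
    using L(1,2) by (auto simp: set_conv_nth)
  ultimately show ?thesis
    using that restrict_in_inc_maps[of p "\<lambda>a. L ! a" n] assms(1) by simp
qed

lemma inj_map_eq_inc_map_comp_permutation:
  assumes f: "f \<in> {..<p} \<rightarrow>\<^sub>E {..<n}" and inj: "inj_on f {..<p}"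
  obtains \<kappa> \<tau> where "\<kappa> \<in> inc_maps p n" "\<tau> permutes {..<p}" "f = restrict (\<kappa> \<circ> \<tau>) {..<p}"
proof -
  let ?U = "{..<p}"
  obtain \<kappa> where \<kappa>: "\<kappa> \<in> inc_maps p n" "\<kappa> ` ?U = f ` ?U"
    using inc_map_enumerating[of "f ` ?U" n p] f inj by (auto simp: card_image)
  then have "bij_betw \<kappa> ?U (f ` ?U)"
    using strict_mono_on_imp_inj_on[OF inc_mapsD(1)] by (simp add: bij_betw_def)
  moreover have "bij_betw f ?U (f ` ?U)"
    using inj by (simp add: bij_betw_def)
  ultimately have "bij_betw (inv_into ?U \<kappa> \<circ> f) ?U ?U"
    using bij_betw_trans bij_betw_inv_into by blast
  define \<tau> where "\<tau> a = (if a \<in> ?U then inv_into ?U \<kappa> (f a) else a)" for a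
  have "bij_betw \<tau> ?U ?U"
    by (rule bij_betw_cong[THEN iffD1, OF _ \<open>bij_betw (inv_into ?U \<kappa> \<circ> f) ?U ?U\<close>]) (simp add: \<tau>_def)
  then have "\<tau> permutes ?U"
    by (rule bij_imp_permutes) (simp add: \<tau>_def)
  moreover have "f = restrict (\<kappa> \<circ> \<tau>) ?U"
  proof (rule extensionalityI)
    show "f \<in> extensional ?U"
      using f by (simp add: PiE_iff)
    show "f a = restrict (\<kappa> \<circ> \<tau>) ?U a" if "a \<in> ?U" for a
      using that \<kappa>(2) by (simp add: \<tau>_def f_inv_into_f)
  qed simp
  ultimately show ?thesis
    using that \<kappa>(1) by blast
qed

lemma inj_on_restrict_comp_permutations:
  "inj_on (\<lambda>(\<kappa>, \<tau>). restrict (\<kappa> \<circ> \<tau>) {..<p}) (inc_maps p n \<times> {\<tau>. \<tau> permutes {..<p}})"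
proof (rule inj_onI, clarify)
  let ?U = "{..<p}"
  fix \<kappa> \<tau> \<kappa>' \<tau>'
  assume \<kappa>: "\<kappa> \<in> inc_maps p n" and \<tau>: "\<tau> permutes ?U"
    and \<kappa>': "\<kappa>' \<in> inc_maps p n" and \<tau>': "\<tau>' permutes ?U"
    and eq: "restrict (\<kappa> \<circ> \<tau>) ?U = restrict (\<kappa>' \<circ> \<tau>') ?U"
  have image: "restrict (g \<circ> \<sigma>) ?U ` ?U = g ` ?U" if "\<sigma> permutes ?U" for g :: "nat \<Rightarrow> nat" and \<sigma>
    using permutes_image[OF that] by (metis image_comp image_restrict_eq)
  have "\<kappa> ` ?U = \<kappa>' ` ?U"
    using image[OF \<tau>, of \<kappa>] image[OF \<tau>', of \<kappa>'] eq by simp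
  then have \<kappa>\<kappa>': "\<kappa> = \<kappa>'"
    using inc_maps_image_eqD[OF \<kappa> \<kappa>'] by simp
  have "\<tau> a = \<tau>' a" for a
  proof (cases "a \<in> ?U")
    case True
    then have "\<kappa> (\<tau> a) = \<kappa> (\<tau>' a)"
      using fun_cong[OF eq, of a] \<kappa>\<kappa>' by simp
    then show ?thesis
      using strict_mono_on_imp_inj_on[OF inc_mapsD(1)[OF \<kappa>]] True
        permutes_in_image[OF \<tau>] permutes_in_image[OF \<tau>'] by (auto dest: inj_onD)
  next
    case False
    then show ?thesis
      using \<tau> \<tau>' by (simp add: permutes_not_in)
  qed
  then show "\<kappa> = \<kappa>' \<and> \<tau> = \<tau>'"
    using \<kappa>\<kappa>' by auto
qed

lemma bij_betw_inc_maps_permutations: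
  "bij_betw (\<lambda>(\<kappa>, \<tau>). restrict (\<kappa> \<circ> \<tau>) {..<p})
     (inc_maps p n \<times> {\<tau>. \<tau> permutes {..<p}}) {f \<in> {..<p} \<rightarrow>\<^sub>E {..<n}. inj_on f {..<p}}"
proof (rule bij_betw_imageI[OF inj_on_restrict_comp_permutations])
  let ?U = "{..<p}"
  show "(\<lambda>(\<kappa>, \<tau>). restrict (\<kappa> \<circ> \<tau>) ?U) ` (inc_maps p n \<times> {\<tau>. \<tau> permutes ?U})
      = {f \<in> ?U \<rightarrow>\<^sub>E {..<n}. inj_on f ?U}"
  proof (intro equalityI subsetI)
    fix f
    assume "f \<in> {f \<in> ?U \<rightarrow>\<^sub>E {..<n}. inj_on f ?U}"
    then obtain \<kappa> \<tau> where "\<kappa> \<in> inc_maps p n" "\<tau> permutes ?U" "f = restrict (\<kappa> \<circ> \<tau>) ?U"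
      using inj_map_eq_inc_map_comp_permutation by blast
    then show "f \<in> (\<lambda>(\<kappa>, \<tau>). restrict (\<kappa> \<circ> \<tau>) ?U) ` (inc_maps p n \<times> {\<tau>. \<tau> permutes ?U})"
      by auto
  next
    fix f
    assume "f \<in> (\<lambda>(\<kappa>, \<tau>). restrict (\<kappa> \<circ> \<tau>) ?U) ` (inc_maps p n \<times> {\<tau>. \<tau> permutes ?U})"
    then obtain \<kappa> \<tau> where \<kappa>: "\<kappa> \<in> inc_maps p n" and \<tau>: "\<tau> permutes ?U"
      and f: "f = restrict (\<kappa> \<circ> \<tau>) ?U"
      by auto
    have "inj_on (\<kappa> \<circ> \<tau>) ?U"
      using strict_mono_on_imp_inj_on[OF inc_mapsD(1)[OF \<kappa>]] permutes_inj_on[OF \<tau>]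
        permutes_image[OF \<tau>] by (simp add: comp_inj_on)
    moreover have "(\<kappa> \<circ> \<tau>) ` ?U \<subseteq> {..<n}"
      using inc_mapsD(2)[OF \<kappa>] permutes_image[OF \<tau>] by (simp only: image_comp[symmetric])
    ultimately show "f \<in> {f \<in> ?U \<rightarrow>\<^sub>E {..<n}. inj_on f ?U}"
      unfolding f by (auto simp: inj_on_def)
  qed
qed

lemma det_mat_permutations:
  "det (mat p p g) = (\<Sum>\<sigma> | \<sigma> permutes {..<p}. of_int (sign \<sigma>) * (\<Prod>a<p. g (a, \<sigma> a)))"
  by (subst det_def'[of _ p]) (auto simp: atLeast0LessThan permutes_in_image intro!: sum.cong prod.cong)

lemma det_mat_permute_rows:
  assumes "\<tau> permutes {..<p}"
  shows "det (mat p p (\<lambda>(a, b). g (\<tau> a) b)) = of_int (sign \<tau>) * det (mat p p (\<lambda>(a, b). g a b))"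
proof -
  have "mat p p (\<lambda>(a, b). g (\<tau> a) b) = mat p p (\<lambda>(a, b). mat p p (\<lambda>(a, b). g a b) $$ (\<tau> a, b))"
    using permutes_in_image[OF assms] by (intro eq_matI) auto
  then show ?thesis
    using det_permute_rows[of "mat p p (\<lambda>(a, b). g a b)" p \<tau>] assms by (simp add: atLeast0LessThan)
qed

lemma det_mat_sum_expand:
  fixes X Y :: "nat \<Rightarrow> nat \<Rightarrow> 'a::comm_ring_1"
  shows "det (mat p p (\<lambda>(a, b). \<Sum>k<n. X a k * Y k b)) =
    (\<Sum>f \<in> {..<p} \<rightarrow>\<^sub>E {..<n}. (\<Prod>a<p. X a (f a)) * det (mat p p (\<lambda>(a, b). Y (f a) b)))"
proof -
  let ?P = "{\<sigma>. \<sigma> permutes {..<p}}" and ?F = "{..<p} \<rightarrow>\<^sub>E {..<n}"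
  have "det (mat p p (\<lambda>(a, b). \<Sum>k<n. X a k * Y k b)) =
      (\<Sum>\<sigma>\<in>?P. of_int (sign \<sigma>) * (\<Sum>f\<in>?F. \<Prod>a<p. X a (f a) * Y (f a) (\<sigma> a)))"
    by (simp add: det_mat_permutations prod_sum_PiE)
  also have "\<dots> = (\<Sum>f\<in>?F. \<Sum>\<sigma>\<in>?P. (\<Prod>a<p. X a (f a)) * (of_int (sign \<sigma>) * (\<Prod>a<p. Y (f a) (\<sigma> a))))"
    by (subst sum.swap) (simp add: sum_distrib_left prod.distrib mult.left_commute)
  also have "\<dots> = (\<Sum>f\<in>?F. (\<Prod>a<p. X a (f a)) * det (mat p p (\<lambda>(a, b). Y (f a) b)))"
    by (simp add: det_mat_permutations sum_distrib_left)
  finally show ?thesis .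
qed

lemma det_mat_sum_expand_inj:
  fixes X Y :: "nat \<Rightarrow> nat \<Rightarrow> 'a::comm_ring_1"
  shows "det (mat p p (\<lambda>(a, b). \<Sum>k<n. X a k * Y k b)) =
    (\<Sum>f \<in> {f \<in> {..<p} \<rightarrow>\<^sub>E {..<n}. inj_on f {..<p}}. (\<Prod>a<p. X a (f a)) * det (mat p p (\<lambda>(a, b). Y (f a) b)))"
  unfolding det_mat_sum_expand
proof (rule sum.mono_neutral_right)
  \<comment> \<open>a map with a repeated value selects two equal rows of \<open>Y\<close>\<close>
  show "\<forall>f \<in> ({..<p} \<rightarrow>\<^sub>E {..<n}) - {f \<in> {..<p} \<rightarrow>\<^sub>E {..<n}. inj_on f {..<p}}.
      (\<Prod>a<p. X a (f a)) * det (mat p p (\<lambda>(a, b). Y (f a) b)) = 0"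
  proof
    fix f
    assume "f \<in> ({..<p} \<rightarrow>\<^sub>E {..<n}) - {f \<in> {..<p} \<rightarrow>\<^sub>E {..<n}. inj_on f {..<p}}"
    then obtain i j where "i < p" "j < p" "i \<noteq> j" "f i = f j"
      unfolding inj_on_def by auto
    then have "det (mat p p (\<lambda>(a, b). Y (f a) b)) = 0"
      by (intro det_identical_rows[of _ p i j]) auto
    then show "(\<Prod>a<p. X a (f a)) * det (mat p p (\<lambda>(a, b). Y (f a) b)) = 0"
      by simp
  qed
qed (auto intro: finite_PiE)

theorem cauchy_binet:
  fixes X Y :: "nat \<Rightarrow> nat \<Rightarrow> 'a::comm_ring_1"
  shows "det (mat p p (\<lambda>(a, b). \<Sum>k<n. X a k * Y k b)) =
    (\<Sum>\<kappa>\<in>inc_maps p n. det (mat p p (\<lambda>(a, c). X a (\<kappa> c))) * det (mat p p (\<lambda>(c, b). Y (\<kappa> c) b)))"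
proof -
  let ?U = "{..<p}"
  let ?P = "{\<tau>. \<tau> permutes ?U}"
  define G where "G f = (\<Prod>a<p. X a (f a)) * det (mat p p (\<lambda>(a, b). Y (f a) b))" for f
  have "G (restrict (\<kappa> \<circ> \<tau>) ?U) = (of_int (sign \<tau>) * (\<Prod>a<p. X a (\<kappa> (\<tau> a)))) * det (mat p p (\<lambda>(c, b). Y (\<kappa> c) b))"
    if "\<tau> \<in> ?P" for \<kappa> \<tau>
  proof -
    have "det (mat p p (\<lambda>(a, b). Y (restrict (\<kappa> \<circ> \<tau>) ?U a) b)) = det (mat p p (\<lambda>(a, b). Y (\<kappa> (\<tau> a)) b))"
      by (intro arg_cong[where f = det] eq_matI) auto
    then show ?thesis
      using det_mat_permute_rows[of \<tau> p "\<lambda>c b. Y (\<kappa> c) b"] that unfolding G_def by (simp add: ac_simps)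
  qed
  moreover have "det (mat p p (\<lambda>(a, c). X a (\<kappa> c))) = (\<Sum>\<tau>\<in>?P. of_int (sign \<tau>) * (\<Prod>a<p. X a (\<kappa> (\<tau> a))))" for \<kappa>
    by (simp add: det_mat_permutations)
  moreover have "det (mat p p (\<lambda>(a, b). \<Sum>k<n. X a k * Y k b)) = (\<Sum>(\<kappa>, \<tau>) \<in> inc_maps p n \<times> ?P. G (restrict (\<kappa> \<circ> \<tau>) ?U))"
    unfolding det_mat_sum_expand_inj G_def[symmetric]
    using sum.reindex_bij_betw[OF bij_betw_inc_maps_permutations, of G] by (simp add: case_prod_unfold)
  ultimately show ?thesis
    by (simp add: sum.cartesian_product[symmetric] sum_distrib_right)
qed

definition minor :: "'a::comm_ring_1 mat \<Rightarrow> nat \<Rightarrow> (nat \<Rightarrow> nat) \<Rightarrow> (nat \<Rightarrow> nat) \<Rightarrow> 'a" where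
  "minor A p i j = det (mat p p (\<lambda>(a, b). A $$ (i a, j b)))"

lemma minor_cong:
  assumes "\<And>a. a < p \<Longrightarrow> i a = i' a" "\<And>a. a < p \<Longrightarrow> j a = j' a"
  shows "minor A p i j = minor A p i' j'"
  unfolding minor_def using assms by (intro arg_cong[where f = det] eq_matI) auto

lemma minor_mult:
  assumes A: "A \<in> carrier_mat n n" and B: "B \<in> carrier_mat n n"
    and i: "i ` {..<p} \<subseteq> {..<n}" and j: "j ` {..<p} \<subseteq> {..<n}"
  shows "minor (A * B) p i j = (\<Sum>\<kappa>\<in>inc_maps p n. minor A p i \<kappa> * minor B p \<kappa> j)"
proof -
  have "minor (A * B) p i j = det (mat p p (\<lambda>(a, b). \<Sum>k<n. A $$ (i a, k) * B $$ (k, j b)))"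
    unfolding minor_def using A B i j
    by (intro arg_cong[where f = det] eq_matI) (auto simp: scalar_prod_def atLeast0LessThan image_subset_iff intro!: sum.cong)
  then show ?thesis
    unfolding minor_def by (simp add: cauchy_binet)
qed

lemma (in comm_ring_hom) minor_map_mat:
  assumes "i ` {..<p} \<subseteq> {..<dim_row A}" "j ` {..<p} \<subseteq> {..<dim_col A}"
  shows "minor (map_mat hom A) p i j = hom (minor A p i j)"
proof -
  have "mat p p (\<lambda>(a, b). map_mat hom A $$ (i a, j b)) = map_mat hom (mat p p (\<lambda>(a, b). A $$ (i a, j b)))"
    using assms by (intro eq_matI) (auto simp: image_subset_iff)
  then show ?thesis
    unfolding minor_def by simp
qed

lemma strict_mono_on_pick: "strict_mono_on {..<card I} (pick I)"
  unfolding strict_mono_on_def using pick_mono_le by blast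

lemma pick_image_subset: "pick I ` {..<card I} \<subseteq> I"
  using pick_in_set_le by blast

lemma det_submatrix_eq_minor:
  assumes "I \<subseteq> {..<dim_row A}" "J \<subseteq> {..<dim_col A}" "card I = card J"
  shows "det (submatrix A I J) = minor A (card I) (pick I) (pick J)"
proof -
  have "{a. a < dim_row A \<and> a \<in> I} = I" "{b. b < dim_col A \<and> b \<in> J} = J"
    using assms by auto
  then show ?thesis
    unfolding submatrix_def minor_def using assms(3) by simp
qed

definition totally_nonneg :: "nat \<Rightarrow> 'a::linordered_idom mat \<Rightarrow> bool" where
  "totally_nonneg n A \<longleftrightarrow> (\<forall>p i j. strict_mono_on {..<p} i \<longrightarrow> strict_mono_on {..<p} j \<longrightarrow>
     i ` {..<p} \<subseteq> {..<n} \<longrightarrow> j ` {..<p} \<subseteq> {..<n} \<longrightarrow> minor A p i j \<ge> 0)"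

lemma totally_nonnegD:
  "totally_nonneg n A \<Longrightarrow> strict_mono_on {..<p} i \<Longrightarrow> strict_mono_on {..<p} j \<Longrightarrow>
    i ` {..<p} \<subseteq> {..<n} \<Longrightarrow> j ` {..<p} \<subseteq> {..<n} \<Longrightarrow> minor A p i j \<ge> 0"
  unfolding totally_nonneg_def by blast

lemma totally_nonneg_minor_product_nonneg:
  assumes "totally_nonneg n A" "totally_nonneg n B"
    and i: "strict_mono_on {..<p} i" "i ` {..<p} \<subseteq> {..<n}"
    and j: "strict_mono_on {..<p} j" "j ` {..<p} \<subseteq> {..<n}"
    and \<kappa>: "\<kappa> \<in> inc_maps p n"
  shows "minor A p i \<kappa> * minor B p \<kappa> j \<ge> 0"
  using totally_nonnegD[OF assms(1) i(1) inc_mapsD(1)[OF \<kappa>] i(2) inc_mapsD(2)[OF \<kappa>]]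
    totally_nonnegD[OF assms(2) inc_mapsD(1)[OF \<kappa>] j(1) inc_mapsD(2)[OF \<kappa>] j(2)] by simp

lemma totally_nonneg_mult:
  assumes "A \<in> carrier_mat n n" "B \<in> carrier_mat n n" "totally_nonneg n A" "totally_nonneg n B"
  shows "totally_nonneg n (A * B)"
  unfolding totally_nonneg_def
proof (intro allI impI)
  fix p :: nat and i j :: "nat \<Rightarrow> nat"
  assume ij: "strict_mono_on {..<p} i" "strict_mono_on {..<p} j" "i ` {..<p} \<subseteq> {..<n}" "j ` {..<p} \<subseteq> {..<n}"
  show "minor (A * B) p i j \<ge> 0"
    unfolding minor_mult[OF assms(1,2) ij(3,4)]
    by (intro sum_nonneg totally_nonneg_minor_product_nonneg[OF assms(3,4) ij(1,3) ij(2,4)])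
qed

lemma minor_mult_ge_product:
  assumes "A \<in> carrier_mat n n" "B \<in> carrier_mat n n" "totally_nonneg n A" "totally_nonneg n B"
    and i: "strict_mono_on {..<p} i" "i ` {..<p} \<subseteq> {..<n}"
    and j: "strict_mono_on {..<p} j" "j ` {..<p} \<subseteq> {..<n}"
    and \<kappa>: "\<kappa> \<in> inc_maps p n"
  shows "minor A p i \<kappa> * minor B p \<kappa> j \<le> minor (A * B) p i j"
  unfolding minor_mult[OF assms(1,2) i(2) j(2)]
  by (intro member_le_sum[OF \<kappa> _ finite_inc_maps] totally_nonneg_minor_product_nonneg[OF assms(3,4) i j]) simp

lemma totally_nonneg_power:
  assumes "A \<in> carrier_mat n n" "totally_nonneg n A"
  shows "totally_nonneg n (A ^\<^sub>m Suc m)"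
proof (induction m)
  case 0
  then show ?case
    using assms by simp
next
  case (Suc m)
  have "totally_nonneg n (A ^\<^sub>m Suc m * A)"
    by (rule totally_nonneg_mult[OF pow_carrier_mat[OF assms(1)] assms(1) Suc.IH assms(2)])
  then show ?case
    by simp
qed

section \<open>Minors of the Kac--Murdock--Szego matrix\<close>

definition nat_dist :: "nat \<Rightarrow> nat \<Rightarrow> nat" where
  "nat_dist j k = (if j \<le> k then k - j else j - k)"

lemma nat_dist_commute: "nat_dist j k = nat_dist k j"
  unfolding nat_dist_def by auto

lemma nat_dist_self [simp]: "nat_dist j j = 0"
  unfolding nat_dist_def by simp

lemma nat_dist_eq_0_iff [simp]: "nat_dist j k = 0 \<longleftrightarrow> j = k"
  unfolding nat_dist_def by auto

definition kms_minor :: "'a::comm_ring_1 \<Rightarrow> nat \<Rightarrow> (nat \<Rightarrow> nat) \<Rightarrow> (nat \<Rightarrow> nat) \<Rightarrow> 'a" where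
  "kms_minor r p i j = det (mat p p (\<lambda>(a, b). r ^ nat_dist (i a) (j b)))"

lemma kms_minor_commute: "kms_minor r p i j = kms_minor r p j i"
proof -
  have "transpose_mat (mat p p (\<lambda>(a, b). r ^ nat_dist (i a) (j b))) = mat p p (\<lambda>(a, b). r ^ nat_dist (j a) (i b))"
    by (intro eq_matI) (auto simp: nat_dist_commute)
  then show ?thesis
    unfolding kms_minor_def by (metis det_transpose mat_carrier)
qed

lemma kms_minor_0 [simp]: "kms_minor r 0 i j = 1"
  unfolding kms_minor_def by simp

lemma kms_minor_1 [simp]: "kms_minor r (Suc 0) i j = r ^ nat_dist (i 0) (j 0)"
  unfolding kms_minor_def by (subst det_single) auto

definition kms_pivot :: "'a::comm_ring_1 \<Rightarrow> nat \<Rightarrow> nat \<Rightarrow> nat \<Rightarrow> nat \<Rightarrow> 'a" where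
  "kms_pivot r i0 j0 i1 j1 =
    (if max i0 j0 \<le> min i1 j1 then r ^ nat_dist i0 j0 * (1 - r ^ (2 * (min i1 j1 - max i0 j0))) else 0)"

lemma kms_row_reduction_entry:
  fixes r :: "'a::comm_ring_1"
  assumes "i0 < i1"
  shows "r ^ nat_dist i0 j - r ^ (i1 - i0) * r ^ nat_dist i1 j =
    (if j \<le> i1 then r ^ nat_dist i0 j * (1 - r ^ (2 * (i1 - max i0 j))) else 0)"
proof -
  consider (between) "i0 \<le> j" "j \<le> i1" | (below) "j < i0" | (above) "i1 < j"
    by linarith
  then show ?thesis
  proof cases
    case between
    then obtain a b where "j = i0 + a" "i1 = j + b"
      by (auto simp: le_iff_add)
    then show ?thesis
      by (simp add: nat_dist_def power_add mult_2 right_diff_distrib)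
  next
    case below
    then obtain a b where "i0 = j + a" "i1 = i0 + b"
      using assms by (auto simp: le_iff_add dest!: less_imp_le)
    then show ?thesis
      using below by (simp add: nat_dist_def power_add mult_2 mult_2_right right_diff_distrib ac_simps)
  next
    case above
    then obtain a b where "i1 = i0 + a" "j = i1 + b"
      using assms by (auto simp: le_iff_add dest!: less_imp_le)
    then show ?thesis
      using above by (simp add: nat_dist_def power_add)
  qed
qed

lemma kms_minor_Suc_Suc_le:
  assumes i: "strict_mono_on {..<Suc (Suc p)} i" and j: "strict_mono_on {..<Suc (Suc p)} j"
    and le: "i 1 \<le> j 1"
  shows "kms_minor r (Suc (Suc p)) i j = kms_pivot r (i 0) (j 0) (i 1) (j 1) * kms_minor r (Suc p) (i \<circ> Suc) (j \<circ> Suc)"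
proof -
  define A where "A = mat (Suc (Suc p)) (Suc (Suc p)) (\<lambda>(a, b). r ^ nat_dist (i a) (j b))"
  \<comment> \<open>subtracting \<open>r ^ (i 1 - i 0)\<close> times row 1 from row 0 clears row 0 except for its first entry\<close>
  define A' where "A' = addrow (- (r ^ (i 1 - i 0))) 0 1 A"
  have A: "A \<in> carrier_mat (Suc (Suc p)) (Suc (Suc p))" and A': "A' \<in> carrier_mat (Suc (Suc p)) (Suc (Suc p))"
    unfolding A_def A'_def by simp_all
  have i01: "i 0 < i 1"
    using i by (simp add: strict_mono_on_def)
  have "kms_minor r (Suc (Suc p)) i j = det A'"
    unfolding kms_minor_def A_def[symmetric] A'_def by (simp add: det_addrow[OF _ _ A])
  also have "\<dots> = A' $$ (0, 0) * cofactor A' 0 0 + (\<Sum>b<Suc p. A' $$ (0, Suc b) * cofactor A' 0 (Suc b))"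
    by (simp add: laplace_expansion_row[OF A', of 0] sum.lessThan_Suc_shift del: sum.lessThan_Suc)
  also have "(\<Sum>b<Suc p. A' $$ (0, Suc b) * cofactor A' 0 (Suc b)) = 0"
  proof (intro sum.neutral ballI)
    fix b
    assume b: "b \<in> {..<Suc p}"
    then have "i 1 \<le> j (Suc b)"
      using j le by (cases b) (auto simp: strict_mono_on_def less_imp_le intro: order_trans)
    then obtain u v where "i 1 = i 0 + u" "j (Suc b) = i 1 + v"
      using i01 by (metis less_imp_le le_Suc_ex)
    then have "A' $$ (0, Suc b) = 0"
      unfolding A'_def A_def using b by (simp add: nat_dist_def power_add)
    then show "A' $$ (0, Suc b) * cofactor A' 0 (Suc b) = 0"
      by simp
  qed
  also have "A' $$ (0, 0) = kms_pivot r (i 0) (j 0) (i 1) (j 1)"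
    using kms_row_reduction_entry[OF i01, of r "j 0"] le i01
    unfolding A'_def A_def kms_pivot_def by (auto simp: min_def max_def)
  also have "cofactor A' 0 0 = kms_minor r (Suc p) (i \<circ> Suc) (j \<circ> Suc)"
  proof -
    have "mat_delete A' 0 0 = mat (Suc p) (Suc p) (\<lambda>(a, b). r ^ nat_dist ((i \<circ> Suc) a) ((j \<circ> Suc) b))"
      unfolding mat_delete_def A'_def A_def by (intro eq_matI) auto
    then show ?thesis
      unfolding cofactor_def kms_minor_def by simp
  qed
  finally show ?thesis
    by simp
qed

lemma kms_minor_Suc_Suc:
  assumes i: "strict_mono_on {..<Suc (Suc p)} i" and j: "strict_mono_on {..<Suc (Suc p)} j"
  shows "kms_minor r (Suc (Suc p)) i j = kms_pivot r (i 0) (j 0) (i 1) (j 1) * kms_minor r (Suc p) (i \<circ> Suc) (j \<circ> Suc)"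
proof (cases "i 1 \<le> j 1")
  case True
  then show ?thesis
    using kms_minor_Suc_Suc_le[OF i j] by simp
next
  case False
  have "kms_pivot r (j 0) (i 0) (j 1) (i 1) = kms_pivot r (i 0) (j 0) (i 1) (j 1)"
    unfolding kms_pivot_def by (simp add: nat_dist_commute max.commute min.commute)
  then show ?thesis
    using kms_minor_Suc_Suc_le[OF j i] False kms_minor_commute by (metis nat_le_linear)
qed

lemma strict_mono_on_comp_Suc:
  "strict_mono_on {..<Suc p} i \<Longrightarrow> strict_mono_on {..<p} (i \<circ> Suc)"
  unfolding strict_mono_on_def by simp

lemma kms_minor_nonneg:
  fixes r :: real
  assumes r: "0 \<le> r" "r \<le> 1" and "strict_mono_on {..<p} i" "strict_mono_on {..<p} j"
  shows "kms_minor r p i j \<ge> 0"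
  using assms(3,4)
proof (induction p arbitrary: i j rule: induct_nat_012)
  case (ge2 p)
  have "kms_pivot r (i 0) (j 0) (i 1) (j 1) \<ge> 0"
    using r by (simp add: kms_pivot_def power_le_one)
  then show ?case
    using ge2 kms_minor_Suc_Suc strict_mono_on_comp_Suc by (metis mult_nonneg_nonneg)
qed (use r in simp_all)

definition interlacing :: "nat \<Rightarrow> (nat \<Rightarrow> nat) \<Rightarrow> (nat \<Rightarrow> nat) \<Rightarrow> bool" where
  "interlacing p i j \<longleftrightarrow> (\<forall>a. Suc a < p \<longrightarrow> i a < j (Suc a) \<and> j a < i (Suc a))"

lemma interlacing_refl: "strict_mono_on {..<p} i \<Longrightarrow> interlacing p i i"
  unfolding interlacing_def strict_mono_on_def by simp

lemma kms_minor_pos: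
  fixes r :: real
  assumes r: "0 < r" "r < 1" and "strict_mono_on {..<p} i" "strict_mono_on {..<p} j" "interlacing p i j"
  shows "kms_minor r p i j > 0"
  using assms(3-5)
proof (induction p arbitrary: i j rule: induct_nat_012)
  case (ge2 p)
  then have "max (i 0) (j 0) < min (i 1) (j 1)"
    unfolding interlacing_def strict_mono_on_def by simp
  then have "kms_pivot r (i 0) (j 0) (i 1) (j 1) > 0"
    using r by (simp add: kms_pivot_def power_less_one_iff)
  moreover have "interlacing (Suc p) (i \<circ> Suc) (j \<circ> Suc)"
    using ge2.prems(3) unfolding interlacing_def by simp
  ultimately show ?case
    using ge2 kms_minor_Suc_Suc strict_mono_on_comp_Suc by (metis mult_pos_pos)
qed (use r in simp_all)

definition kms_matrix :: "nat \<Rightarrow> 'a::comm_ring_1 \<Rightarrow> 'a mat" where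
  "kms_matrix n r = mat n n (\<lambda>(j, k). r ^ nat_dist j k)"

lemma kms_matrix_carrier: "kms_matrix n r \<in> carrier_mat n n"
  unfolding kms_matrix_def by simp

lemma dim_kms_matrix [simp]: "dim_row (kms_matrix n r) = n" "dim_col (kms_matrix n r) = n"
  unfolding kms_matrix_def by simp_all

lemma minor_kms_matrix:
  "i ` {..<p} \<subseteq> {..<n} \<Longrightarrow> j ` {..<p} \<subseteq> {..<n} \<Longrightarrow> minor (kms_matrix n r) p i j = kms_minor r p i j"
  unfolding minor_def kms_minor_def kms_matrix_def
  by (intro arg_cong[where f = det] eq_matI) (auto simp: image_subset_iff)

lemma totally_nonneg_kms_matrix:
  fixes r :: real
  assumes "0 \<le> r" "r \<le> 1"
  shows "totally_nonneg n (kms_matrix n r)"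
  unfolding totally_nonneg_def using assms by (simp add: minor_kms_matrix kms_minor_nonneg)

section \<open>Strict positivity of the minors of powers\<close>

definition index_dist :: "nat \<Rightarrow> (nat \<Rightarrow> nat) \<Rightarrow> (nat \<Rightarrow> nat) \<Rightarrow> nat" where
  "index_dist p i j = (\<Sum>a<p. nat_dist (i a) (j a))"

lemma index_dist_eq_0_iff: "index_dist p i j = 0 \<longleftrightarrow> (\<forall>a<p. i a = j a)"
  unfolding index_dist_def by auto

lemma fun_upd_strict_mono_interlacing:
  assumes j: "strict_mono_on {..<p} j"
    and below: "\<And>a. a < r \<Longrightarrow> j a < v" and above: "\<And>b. r < b \<Longrightarrow> b < p \<Longrightarrow> v < j b"
  shows "strict_mono_on {..<p} (j(r := v))" "interlacing p (j(r := v)) j"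
proof -
  show "strict_mono_on {..<p} (j(r := v))"
  proof (rule strict_mono_onI)
    fix a b
    assume "a \<in> {..<p}" "b \<in> {..<p}" "a < b"
    then show "(j(r := v)) a < (j(r := v)) b"
      using strict_mono_onD[OF j, of a b] below[of a] above[of b] by auto
  qed
  show "interlacing p (j(r := v)) j"
    unfolding interlacing_def
  proof (intro allI impI)
    fix a
    assume "Suc a < p"
    then show "(j(r := v)) a < j (Suc a) \<and> j a < (j(r := v)) (Suc a)"
      using strict_mono_onD[OF j, of a "Suc a"] below[of a] above[of "Suc a"] by auto
  qed
qed

lemma index_dist_fun_upd_less:
  assumes "r < p" "nat_dist (i r) v < nat_dist (i r) (j r)"
  shows "index_dist p i (j(r := v)) < index_dist p i j"
  unfolding index_dist_def by (rule sum_strict_mono_ex1) (use assms in auto)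

lemma interlacing_step_up:
  assumes i: "strict_mono_on {..<p} i" "i ` {..<p} \<subseteq> {..<n}"
    and j: "strict_mono_on {..<p} j" "j ` {..<p} \<subseteq> {..<n}" and below: "\<exists>a<p. j a < i a"
  obtains \<kappa> where "strict_mono_on {..<p} \<kappa>" "\<kappa> ` {..<p} \<subseteq> {..<n}" "interlacing p \<kappa> j"
    "index_dist p i \<kappa> < index_dist p i j"
proof -
  define S where "S = {a. a < p \<and> j a < i a}"
  define r where "r = Max S"
  have S: "finite S" "S \<noteq> {}"
    unfolding S_def using below by auto
  then have "r \<in> S"
    unfolding r_def by (rule Max_in)
  then have rp: "r < p" and jr: "j r < i r"
    unfolding S_def by auto
  have i_le_j: "i a \<le> j a" if "r < a" "a < p" for a
  proof (rule ccontr)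
    assume "\<not> i a \<le> j a"
    then have "a \<in> S"
      using that unfolding S_def by auto
    then show False
      using Max_ge[OF S(1), of a] that unfolding r_def by simp
  qed
  \<comment> \<open>beyond the last position where \<open>j\<close> lies below \<open>i\<close>, \<open>j\<close> leaves room to move \<open>j r\<close> up by one\<close>
  have gap: "j r + 1 < j b" if "r < b" "b < p" for b
  proof -
    have "i r < i (Suc r)" "i (Suc r) \<le> j (Suc r)"
      using strict_mono_onD[OF i(1), of r "Suc r"] i_le_j[of "Suc r"] that by auto
    moreover have "j (Suc r) \<le> j b"
      using strict_mono_onD[OF j(1), of "Suc r" b] that by (cases "Suc r = b") auto
    ultimately show ?thesis
      using jr by simp
  qed
  show ?thesis
  proof (rule that)
    show "strict_mono_on {..<p} (j(r := j r + 1))" "interlacing p (j(r := j r + 1)) j"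
      using rp strict_mono_onD[OF j(1)] gap by (intro fun_upd_strict_mono_interlacing[OF j(1)]; force)+
    show "(j(r := j r + 1)) ` {..<p} \<subseteq> {..<n}"
      using i(2) j(2) jr rp unfolding image_subset_iff by (simp add: Suc_le_eq le_less_trans)
    show "index_dist p i (j(r := j r + 1)) < index_dist p i j"
      using rp jr by (intro index_dist_fun_upd_less) (auto simp: nat_dist_def)
  qed
qed

lemma interlacing_step_down:
  assumes i: "strict_mono_on {..<p} i"
    and j: "strict_mono_on {..<p} j" "j ` {..<p} \<subseteq> {..<n}"
    and le: "\<forall>a<p. i a \<le> j a" and less: "\<exists>a<p. i a < j a"
  obtains \<kappa> where "strict_mono_on {..<p} \<kappa>" "\<kappa> ` {..<p} \<subseteq> {..<n}" "interlacing p \<kappa> j"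
    "index_dist p i \<kappa> < index_dist p i j"
proof -
  define S where "S = {a. a < p \<and> i a < j a}"
  define r where "r = Min S"
  have S: "finite S" "S \<noteq> {}"
    unfolding S_def using less by auto
  then have "r \<in> S"
    unfolding r_def by (rule Min_in)
  then have rp: "r < p" and ir: "i r < j r"
    unfolding S_def by auto
  have j_eq_i: "j a = i a" if "a < r" for a
  proof (rule ccontr)
    assume "j a \<noteq> i a"
    then have "a \<in> S"
      using that rp le unfolding S_def by (auto simp: order.strict_iff_order)
    then show False
      using Min_le[OF S(1), of a] that unfolding r_def by simp
  qed
  \<comment> \<open>before the first position where \<open>j\<close> lies above \<open>i\<close>, \<open>j\<close> leaves room to move \<open>j r\<close> down by one\<close>
  have gap: "j a < j r - 1" if "a < r" for a
    using j_eq_i[OF that] strict_mono_onD[OF i, of a r] that rp ir by simp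
  show ?thesis
  proof (rule that)
    show "strict_mono_on {..<p} (j(r := j r - 1))" "interlacing p (j(r := j r - 1)) j"
      using rp strict_mono_onD[OF j(1)] gap by (intro fun_upd_strict_mono_interlacing[OF j(1)]; force)+
    show "(j(r := j r - 1)) ` {..<p} \<subseteq> {..<n}"
      using j(2) rp unfolding image_subset_iff by (simp add: less_imp_diff_less)
    show "index_dist p i (j(r := j r - 1)) < index_dist p i j"
      using rp ir by (intro index_dist_fun_upd_less) (auto simp: nat_dist_def)
  qed
qed

lemma interlacing_step:
  assumes i: "strict_mono_on {..<p} i" "i ` {..<p} \<subseteq> {..<n}"
    and j: "strict_mono_on {..<p} j" "j ` {..<p} \<subseteq> {..<n}" and "\<exists>a<p. i a \<noteq> j a"
  obtains \<kappa> where "strict_mono_on {..<p} \<kappa>" "\<kappa> ` {..<p} \<subseteq> {..<n}" "interlacing p \<kappa> j"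
    "index_dist p i \<kappa> < index_dist p i j"
proof (cases "\<exists>a<p. j a < i a")
  case True
  then show ?thesis
    using interlacing_step_up[OF i j] that by blast
next
  case False
  then have le: "\<forall>a<p. i a \<le> j a"
    by (blast intro: leI)
  obtain a where "a < p" "i a \<noteq> j a"
    using assms(5) by blast
  with le have "\<exists>a<p. i a < j a"
    by (auto simp: order.strict_iff_order)
  with le show ?thesis
    using interlacing_step_down[OF i(1) j] that by blast
qed

text \<open>
  By Cauchy--Binet a minor of \<open>K ^ (m + 2)\<close> dominates the product of a minor of \<open>K ^ (m + 1)\<close>
  and an interlacing minor of \<open>K\<close>, and each factor \<open>K\<close> lets the column indices move one step
  closer to the row indices.
\<close>
lemma kms_matrix_power_minor_pos:
  fixes r :: real
  assumes r: "0 < r" "r < 1"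
    and i: "strict_mono_on {..<p} i" "i ` {..<p} \<subseteq> {..<n}"
    and j: "strict_mono_on {..<p} j" "j ` {..<p} \<subseteq> {..<n}"
    and dist: "index_dist p i j \<le> m"
  shows "minor (kms_matrix n r ^\<^sub>m Suc m) p i j > 0"
  using j dist
proof (induction m arbitrary: j)
  case 0
  then have "minor (kms_matrix n r) p i j = minor (kms_matrix n r) p j j"
    using index_dist_eq_0_iff by (intro minor_cong) auto
  also have "\<dots> > 0"
    using 0 r by (simp add: minor_kms_matrix kms_minor_pos interlacing_refl)
  finally show ?case
    using kms_matrix_carrier by simp
next
  case (Suc m)
  obtain \<kappa> where \<kappa>: "strict_mono_on {..<p} \<kappa>" "\<kappa> ` {..<p} \<subseteq> {..<n}" "interlacing p \<kappa> j"
    "index_dist p i \<kappa> \<le> m"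
  proof (cases "\<exists>a<p. i a \<noteq> j a")
    case True
    then show ?thesis
      using interlacing_step[OF i Suc.prems(1,2)] that Suc.prems(3) by (metis less_Suc_eq_le order_less_le_trans)
  next
    case False
    then have "index_dist p i j = 0"
      using index_dist_eq_0_iff by blast
    then show ?thesis
      using that[of j] Suc.prems(1,2) interlacing_refl by simp
  qed
  let ?K = "kms_matrix n r"
  define \<kappa>' where "\<kappa>' = restrict \<kappa> {..<p}"
  have \<kappa>': "\<kappa>' \<in> inc_maps p n"
    unfolding \<kappa>'_def by (rule restrict_in_inc_maps[OF \<kappa>(1,2)])
  have "minor (?K ^\<^sub>m Suc m) p i \<kappa>' * minor ?K p \<kappa>' j > 0"
  proof (rule mult_pos_pos)
    show "minor (?K ^\<^sub>m Suc m) p i \<kappa>' > 0"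
      using Suc.IH[OF \<kappa>(1,2,4)] by (simp add: \<kappa>'_def cong: minor_cong)
    show "minor ?K p \<kappa>' j > 0"
      using \<kappa> Suc.prems r by (simp add: \<kappa>'_def minor_kms_matrix kms_minor_pos cong: minor_cong)
  qed
  also have "\<dots> \<le> minor (?K ^\<^sub>m Suc m * ?K) p i j"
    using r by (intro minor_mult_ge_product[OF pow_carrier_mat kms_matrix_carrier _ _ i Suc.prems(1,2) \<kappa>']
      kms_matrix_carrier totally_nonneg_power totally_nonneg_kms_matrix) simp_all
  also have "\<dots> = minor (?K ^\<^sub>m Suc (Suc m)) p i j"
    by simp
  finally show ?case .
qed

lemma dim_kms_mat [simp]: "dim_row (kms_mat n \<rho>) = n" "dim_col (kms_mat n \<rho>) = n"
  unfolding kms_mat_def by simp_all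

lemma kms_mat_carrier: "kms_mat n \<rho> \<in> carrier_mat n n"
  unfolding carrier_mat_def by simp

lemma index_kms_mat [simp]: "j < n \<Longrightarrow> k < n \<Longrightarrow> kms_mat n \<rho> $$ (j, k) = \<rho> ^ nat_dist j k"
  unfolding kms_mat_def nat_dist_def by simp

lemma kms_mat_0_1: "2 \<le> n \<Longrightarrow> kms_mat n \<rho> $$ (0, 1) = \<rho>"
  by (simp add: nat_dist_def)

lemma kms_mat_of_real: "kms_mat n (of_real r) = map_mat of_real (kms_matrix n r)"
  by (rule eq_matI) (auto simp: kms_matrix_def)

lemma adjoint_kms_mat: "adjoint_mat (kms_mat n \<rho>) = kms_mat n (cnj \<rho>)"
  unfolding adjoint_mat_def by (rule eq_matI) (auto simp: nat_dist_commute)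

lemma real_mat_kms_mat_iff:
  assumes "2 \<le> n"
  shows "real_mat (kms_mat n \<rho>) \<longleftrightarrow> \<rho> \<in> \<real>"
proof
  assume "real_mat (kms_mat n \<rho>)"
  then have "kms_mat n \<rho> $$ (0, 1) \<in> \<real>"
    using assms unfolding real_mat_def by simp
  then show "\<rho> \<in> \<real>"
    using kms_mat_0_1[OF assms] by simp
qed (simp add: real_mat_def)

lemma all_entries_positive_kms_mat_iff:
  assumes "2 \<le> n"
  shows "all_entries_positive (kms_mat n \<rho>) \<longleftrightarrow> pos_c \<rho>"
proof
  assume "all_entries_positive (kms_mat n \<rho>)"
  then have "pos_c (kms_mat n \<rho> $$ (0, 1))"
    using assms unfolding all_entries_positive_def by simp
  then show "pos_c \<rho>"
    using kms_mat_0_1[OF assms] by simp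
next
  assume "pos_c \<rho>"
  then obtain r where "\<rho> = of_real r" "r > 0"
    unfolding pos_c_def by (auto elim: Reals_cases)
  then show "all_entries_positive (kms_mat n \<rho>)"
    unfolding all_entries_positive_def pos_c_def by (simp flip: of_real_power)
qed

lemma real_symmetric_kms_mat_iff: "2 \<le> n \<Longrightarrow> real_symmetric (kms_mat n \<rho>) \<longleftrightarrow> \<rho> \<in> \<real>"
proof -
  have "transpose_mat (kms_mat n \<rho>) = kms_mat n \<rho>"
    by (rule eq_matI) (auto simp: nat_dist_commute)
  then show "2 \<le> n \<Longrightarrow> ?thesis"
    unfolding real_symmetric_def by (simp add: real_mat_kms_mat_iff)
qed

lemma hermitian_kms_mat_iff: "2 \<le> n \<Longrightarrow> hermitian (kms_mat n \<rho>) \<longleftrightarrow> \<rho> \<in> \<real>"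
  unfolding hermitian_def adjoint_kms_mat Reals_cnj_iff by (metis kms_mat_0_1)

section \<open>Total positivity and oscillation\<close>

lemma minor_1: "minor A 1 i j = A $$ (i 0, j 0)"
  unfolding minor_def by (subst det_single) auto

lemma minor_2: "minor A 2 i j = A $$ (i 0, j 0) * A $$ (i 1, j 1) - A $$ (i 0, j 1) * A $$ (i 1, j 0)"
proof -
  have "det (mat 2 2 f) = f (0, 0) * f (1, 1) - f (0, 1) * f (1, 0)" for f :: "nat \<times> nat \<Rightarrow> 'a"
  proof -
    have "det (mat 2 2 f) = f (0, 0) * cofactor (mat 2 2 f) 0 0 + f (0, 1) * cofactor (mat 2 2 f) 0 1"
      by (subst laplace_expansion_row[of _ 2 0]) (auto simp: numeral_2_eq_2)
    moreover have "cofactor (mat 2 2 f) 0 0 = f (1, 1)" "cofactor (mat 2 2 f) 0 1 = - f (1, 0)"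
      unfolding cofactor_def by (subst det_single; auto simp: mat_delete_def)+
    ultimately show ?thesis
      by simp
  qed
  then show ?thesis
    unfolding minor_def by simp
qed

lemma pick_0_1: "pick {0} 0 = 0" "pick {1} 0 = 1" "pick {0, 1} 0 = 0" "pick {0, 1} 1 = 1"
proof -
  show "pick {0} 0 = 0" "pick {1} 0 = 1" "pick {0, 1} 0 = 0"
    by (simp_all add: Least_equality)
  then show "pick {0, 1} 1 = 1"
    by (auto simp: One_nat_def intro!: Least_equality)
qed

lemma det_submatrix_0_1:
  assumes "2 \<le> n" "A \<in> carrier_mat n n"
  shows "det (submatrix A {0} {1}) = A $$ (0, 1)"
    and "det (submatrix A {0, 1} {0, 1}) = A $$ (0, 0) * A $$ (1, 1) - A $$ (0, 1) * A $$ (1, 0)"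
proof -
  have "det (submatrix A {0} {1}) = minor A (card {0::nat}) (pick {0}) (pick {1})"
    using assms by (intro det_submatrix_eq_minor) auto
  also have "card {0::nat} = 1"
    by simp
  finally show "det (submatrix A {0} {1}) = A $$ (0, 1)"
    by (simp only: minor_1 pick_0_1)
  have "det (submatrix A {0, 1} {0, 1}) = minor A (card {0::nat, 1}) (pick {0, 1}) (pick {0, 1})"
    using assms by (intro det_submatrix_eq_minor) auto
  also have "card {0::nat, 1} = 2"
    by simp
  finally show "det (submatrix A {0, 1} {0, 1}) = A $$ (0, 0) * A $$ (1, 1) - A $$ (0, 1) * A $$ (1, 0)"
    by (simp only: minor_2 pick_0_1)
qed

lemma det_submatrix_map_mat_of_real:
  assumes "A \<in> carrier_mat n n" "I \<subseteq> {..<n}" "J \<subseteq> {..<n}" "card I = card J"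
  shows "det (submatrix (map_mat of_real A) I J) = of_real (minor A (card I) (pick I) (pick J))"
proof -
  have "pick I ` {..<card I} \<subseteq> {..<n}" "pick J ` {..<card I} \<subseteq> {..<n}"
    using pick_image_subset[of I] pick_image_subset[of J] assms(2-4) by auto
  then show ?thesis
    using assms by (simp add: det_submatrix_eq_minor of_real_hom.minor_map_mat)
qed

lemma totally_positive_kms_mat_of_real:
  assumes "0 \<le> r" "r \<le> 1"
  shows "totally_positive (kms_mat n (of_real r))"
  unfolding totally_positive_def
proof
  show "real_mat (kms_mat n (of_real r))"
    unfolding real_mat_def by (simp flip: of_real_power)
  show "all_minors nonneg_c (kms_mat n (of_real r))"
    unfolding all_minors_def
  proof (intro allI impI)
    fix I J
    assume IJ: "I \<subseteq> {..<dim_row (kms_mat n (of_real r))}" "J \<subseteq> {..<dim_col (kms_mat n (of_real r))}"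
      "I \<noteq> {}" "card I = card J"
    then have "minor (kms_matrix n r) (card I) (pick I) (pick J) \<ge> 0"
      using pick_image_subset[of I] pick_image_subset[of J] strict_mono_on_pick[of I] strict_mono_on_pick[of J]
      by (intro totally_nonnegD[OF totally_nonneg_kms_matrix[OF assms]]) auto
    then show "nonneg_c (det (submatrix (kms_mat n (of_real r)) I J))"
      using IJ unfolding kms_mat_of_real nonneg_c_def
      by (simp add: det_submatrix_map_mat_of_real[OF kms_matrix_carrier])
  qed
qed

lemma totally_positive_kms_mat_iff:
  assumes "2 \<le> n"
  shows "totally_positive (kms_mat n \<rho>) \<longleftrightarrow> \<rho> \<in> \<real> \<and> 0 \<le> Re \<rho> \<and> Re \<rho> \<le> 1"
proof
  assume tp: "totally_positive (kms_mat n \<rho>)"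
  then obtain r where r: "\<rho> = of_real r"
    using real_mat_kms_mat_iff[OF assms] unfolding totally_positive_def by (auto elim: Reals_cases)
  have "nonneg_c (det (submatrix (kms_mat n \<rho>) {0} {1}))"
    "nonneg_c (det (submatrix (kms_mat n \<rho>) {0, 1} {0, 1}))"
    using tp assms unfolding totally_positive_def all_minors_def by auto
  then have "0 \<le> r" "r * r \<le> 1"
    unfolding det_submatrix_0_1[OF assms kms_mat_carrier] using assms r by (simp_all add: nonneg_c_def nat_dist_def)
  then have "0 \<le> r \<and> r \<le> 1"
    using less_1_mult[of r r] by fastforce
  then show "\<rho> \<in> \<real> \<and> 0 \<le> Re \<rho> \<and> Re \<rho> \<le> 1"
    using r by simp
next
  assume "\<rho> \<in> \<real> \<and> 0 \<le> Re \<rho> \<and> Re \<rho> \<le> 1"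
  then show "totally_positive (kms_mat n \<rho>)"
    using totally_positive_kms_mat_of_real by (auto elim!: Reals_cases)
qed

lemma index_dist_le:
  assumes "i ` {..<p} \<subseteq> {..<n}" "j ` {..<p} \<subseteq> {..<n}"
  shows "index_dist p i j \<le> p * n"
proof -
  have "nat_dist (i a) (j a) \<le> n" if "a < p" for a
  proof -
    have "i a < n" "j a < n"
      using assms that by auto
    then show ?thesis
      unfolding nat_dist_def by auto
  qed
  then have "index_dist p i j \<le> (\<Sum>a<p. n)"
    unfolding index_dist_def by (intro sum_mono) simp
  then show ?thesis
    by simp
qed

lemma oscillatory_kms_mat_of_real:
  assumes "0 < r" "r < 1"
  shows "oscillatory (kms_mat n (of_real r))"
proof -
  let ?m = "Suc (n * n)"
  have "all_minors pos_c (kms_mat n (of_real r) ^\<^sub>m ?m)"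
    unfolding all_minors_def
  proof (intro allI impI)
    fix I J
    assume IJ: "I \<subseteq> {..<dim_row (kms_mat n (of_real r) ^\<^sub>m ?m)}" "J \<subseteq> {..<dim_col (kms_mat n (of_real r) ^\<^sub>m ?m)}"
      "I \<noteq> {}" "card I = card J"
    then have I: "I \<subseteq> {..<n}" and J: "J \<subseteq> {..<n}"
      using pow_carrier_mat[OF kms_mat_carrier] by auto
    then have ranges: "pick I ` {..<card I} \<subseteq> {..<n}" "pick J ` {..<card I} \<subseteq> {..<n}"
      using pick_image_subset[of I] pick_image_subset[of J] IJ(4) by auto
    have "index_dist (card I) (pick I) (pick J) \<le> card I * n"
      using index_dist_le[OF ranges] .
    also have "\<dots> \<le> n * n"
      using card_mono[OF _ I] by simp
    finally have "minor (kms_matrix n r ^\<^sub>m ?m) (card I) (pick I) (pick J) > 0"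
      using assms ranges strict_mono_on_pick[of I] strict_mono_on_pick[of J] IJ(4)
      by (intro kms_matrix_power_minor_pos) auto
    moreover have pow: "kms_mat n (of_real r) ^\<^sub>m ?m = map_mat of_real (kms_matrix n r ^\<^sub>m ?m)"
      unfolding kms_mat_of_real by (rule of_real_hom.mat_hom_pow[OF kms_matrix_carrier, symmetric])
    ultimately show "pos_c (det (submatrix (kms_mat n (of_real r) ^\<^sub>m ?m) I J))"
      unfolding pow det_submatrix_map_mat_of_real[OF pow_carrier_mat[OF kms_matrix_carrier] I J IJ(4)] pos_c_def
      by simp
  qed
  then show ?thesis
    unfolding oscillatory_def using totally_positive_kms_mat_of_real assms kms_mat_carrier by auto
qed

lemma not_oscillatory_kms_mat_0:
  assumes "2 \<le> n"
  shows "\<not> oscillatory (kms_mat n 0)"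
proof
  assume "oscillatory (kms_mat n 0)"
  then obtain m where "all_minors pos_c (kms_mat n 0 ^\<^sub>m m)"
    unfolding oscillatory_def by blast
  moreover have "kms_mat n 0 ^\<^sub>m m = 1\<^sub>m n"
  proof -
    have "kms_mat n 0 = 1\<^sub>m n"
      by (rule eq_matI) (auto simp: nat_dist_def)
    moreover have "1\<^sub>m n ^\<^sub>m m = (1\<^sub>m n :: complex mat)"
      by (induction m) auto
    ultimately show ?thesis
      by simp
  qed
  ultimately have "pos_c (det (submatrix (1\<^sub>m n :: complex mat) {0} {1}))"
    using assms unfolding all_minors_def by auto
  then show False
    unfolding det_submatrix_0_1(1)[OF assms one_carrier_mat] using assms by (simp add: pos_c_def)
qed

lemma not_oscillatory_kms_mat_1:
  assumes "2 \<le> n"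
  shows "\<not> oscillatory (kms_mat n 1)"
proof
  assume "oscillatory (kms_mat n 1)"
  then obtain m where "m > 0" and pos: "all_minors pos_c (kms_mat n 1 ^\<^sub>m m)"
    unfolding oscillatory_def by blast
  then obtain B where B: "B \<in> carrier_mat n n" and pow: "kms_mat n 1 ^\<^sub>m m = B * kms_mat n 1"
    using pow_carrier_mat[OF kms_mat_carrier] by (metis gr0_conv_Suc pow_mat.simps(2))
  \<comment> \<open>\<open>K\<^sub>n(1)\<close> is the all-ones matrix, so every multiple of it has equal columns\<close>
  have cols: "(B * kms_mat n 1) $$ (a, 0) = (B * kms_mat n 1) $$ (a, 1)" if "a < n" for a
    using that assms B by (simp add: scalar_prod_def)
  have "pos_c (det (submatrix (B * kms_mat n 1) {0, 1} {0, 1}))"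
    using pos assms unfolding pow all_minors_def using B by auto
  then show False
    unfolding det_submatrix_0_1(2)[OF assms mult_carrier_mat[OF B kms_mat_carrier]]
    using assms cols[of 0] cols[of 1] by (simp add: pos_c_def mult.commute)
qed

lemma oscillatory_kms_mat_iff:
  assumes "2 \<le> n"
  shows "oscillatory (kms_mat n \<rho>) \<longleftrightarrow> \<rho> \<in> \<real> \<and> 0 < Re \<rho> \<and> Re \<rho> < 1"
proof
  assume osc: "oscillatory (kms_mat n \<rho>)"
  then have "\<rho> \<in> \<real> \<and> 0 \<le> Re \<rho> \<and> Re \<rho> \<le> 1"
    using totally_positive_kms_mat_iff[OF assms] unfolding oscillatory_def by simp
  moreover have "\<rho> \<noteq> 0" "\<rho> \<noteq> 1"
    using osc not_oscillatory_kms_mat_0[OF assms] not_oscillatory_kms_mat_1[OF assms] by auto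
  ultimately show "\<rho> \<in> \<real> \<and> 0 < Re \<rho> \<and> Re \<rho> < 1"
    by (auto elim!: Reals_cases)
next
  assume "\<rho> \<in> \<real> \<and> 0 < Re \<rho> \<and> Re \<rho> < 1"
  then show "oscillatory (kms_mat n \<rho>)"
    using oscillatory_kms_mat_of_real by (auto elim!: Reals_cases)
qed

section \<open>Positive definiteness\<close>

definition kms_form :: "real \<Rightarrow> nat \<Rightarrow> (nat \<Rightarrow> complex) \<Rightarrow> complex" where
  "kms_form r N y = (\<Sum>j<N. \<Sum>k<N. cnj (y j) * of_real (r ^ nat_dist j k) * y k)"

definition geom_conv :: "real \<Rightarrow> (nat \<Rightarrow> complex) \<Rightarrow> nat \<Rightarrow> complex" where
  "geom_conv r y m = (\<Sum>j\<le>m. of_real (r ^ (m - j)) * y j)"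

lemma geom_conv_0 [simp]: "geom_conv r y 0 = y 0"
  unfolding geom_conv_def by simp

lemma geom_conv_Suc: "geom_conv r y (Suc m) = of_real r * geom_conv r y m + y (Suc m)"
proof -
  have "(\<Sum>j\<le>m. of_real (r ^ (Suc m - j)) * y j) = of_real r * geom_conv r y m"
    unfolding geom_conv_def sum_distrib_left by (rule sum.cong) (auto simp: Suc_diff_le)
  then show ?thesis
    unfolding geom_conv_def by simp
qed

lemma geom_conv_eq_0_imp_eq_0:
  assumes "\<forall>m\<le>N. geom_conv r y m = 0" "j \<le> N"
  shows "y j = 0"
proof -
  have "geom_conv r y j = 0" "geom_conv r y (j - 1) = 0"
    using assms by auto
  then show ?thesis
    using geom_conv_Suc[of r y "j - 1"] by (cases j) auto
qed

lemma kms_border_sum: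
  "(\<Sum>j<Suc N. of_real (r ^ nat_dist j (Suc N)) * y j) = of_real r * geom_conv r y N"
  unfolding geom_conv_def lessThan_Suc_atMost sum_distrib_left
  by (intro sum.cong) (auto simp: nat_dist_def Suc_diff_le mult.assoc)

lemma kms_form_Suc_Suc:
  "kms_form r (Suc (Suc N)) y = kms_form r (Suc N) y
    + of_real r * cnj (geom_conv r y N) * y (Suc N) + of_real r * geom_conv r y N * cnj (y (Suc N))
    + cnj (y (Suc N)) * y (Suc N)"
proof -
  have "(\<Sum>j<Suc N. cnj (y j) * of_real (r ^ nat_dist j (Suc N)) * y (Suc N))
      = cnj (\<Sum>j<Suc N. of_real (r ^ nat_dist j (Suc N)) * y j) * y (Suc N)"
    by (simp add: cnj_sum sum_distrib_left algebra_simps)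
  then have column: "(\<Sum>j<Suc N. cnj (y j) * of_real (r ^ nat_dist j (Suc N)) * y (Suc N))
      = of_real r * cnj (geom_conv r y N) * y (Suc N)"
    by (simp only: kms_border_sum) simp
  have "(\<Sum>k<Suc N. cnj (y (Suc N)) * of_real (r ^ nat_dist (Suc N) k) * y k)
      = cnj (y (Suc N)) * (\<Sum>k<Suc N. of_real (r ^ nat_dist k (Suc N)) * y k)"
    by (simp add: sum_distrib_left nat_dist_commute algebra_simps)
  then have row: "(\<Sum>k<Suc N. cnj (y (Suc N)) * of_real (r ^ nat_dist (Suc N) k) * y k)
      = of_real r * geom_conv r y N * cnj (y (Suc N))"
    by (simp only: kms_border_sum) (simp add: ac_simps)
  show ?thesis
    unfolding kms_form_def lessThan_Suc[of "Suc N"]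
    using column row by (simp add: sum.distrib add.assoc)
qed

lemma kms_form_eq_sum_squares:
  "kms_form r (Suc N) y =
    of_real ((cmod (geom_conv r y N))\<^sup>2 + (1 - r\<^sup>2) * (\<Sum>m<N. (cmod (geom_conv r y m))\<^sup>2))"
proof -
  have "kms_form r (Suc N) y = geom_conv r y N * cnj (geom_conv r y N)
    + of_real (1 - r\<^sup>2) * (\<Sum>m<N. geom_conv r y m * cnj (geom_conv r y m))"
  proof (induction N)
    case 0
    then show ?case
      by (simp add: kms_form_def)
  next
    case (Suc N)
    define a b c where "a = geom_conv r y N" and "b = y (Suc N)" and "c = (of_real r :: complex)"
    have c: "cnj c = c" "of_real (1 - r\<^sup>2) = 1 - c * c"
      unfolding c_def by (simp_all add: power2_eq_square)
    have "kms_form r (Suc (Suc N)) y =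
        a * cnj a + (1 - c * c) * (\<Sum>m<N. geom_conv r y m * cnj (geom_conv r y m))
        + c * cnj a * b + c * a * cnj b + cnj b * b"
      unfolding kms_form_Suc_Suc Suc a_def b_def c_def[symmetric] c(2) ..
    also have "\<dots> = (c * a + b) * cnj (c * a + b)
        + (1 - c * c) * (\<Sum>m<Suc N. geom_conv r y m * cnj (geom_conv r y m))"
      using c(1) unfolding a_def by (simp add: algebra_simps)
    finally show ?case
      unfolding geom_conv_Suc a_def b_def c_def c(2)[unfolded c_def] .
  qed
  then show ?thesis
    by (simp only: of_real_add of_real_mult of_real_sum complex_norm_square)
qed

lemma quad_form_kms_mat_of_real:
  "x \<in> carrier_vec n \<Longrightarrow> quad_form (kms_mat n (of_real r)) x = kms_form r n (\<lambda>j. x $ j)"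
  unfolding quad_form_def kms_form_def by (simp flip: of_real_power)

lemma kms_form_nonneg:
  assumes "\<bar>r\<bar> \<le> 1"
  shows "nonneg_c (kms_form r n y)"
proof (cases n)
  case 0
  then show ?thesis
    by (simp add: kms_form_def nonneg_c_def)
next
  case (Suc N)
  have "r\<^sup>2 \<le> 1"
    using assms abs_square_le_1 by blast
  then show ?thesis
    unfolding Suc kms_form_eq_sum_squares nonneg_c_def by (simp add: sum_nonneg)
qed

lemma kms_form_pos:
  assumes "\<bar>r\<bar> < 1" and nonzero: "\<exists>j<n. y j \<noteq> 0"
  shows "pos_c (kms_form r n y)"
proof -
  obtain N where N: "n = Suc N"
    using nonzero by (cases n) auto
  have "r\<^sup>2 < 1"
    using assms abs_square_less_1 by blast
  then have r2: "1 - r\<^sup>2 > 0"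
    by simp
  define v where "v = (cmod (geom_conv r y N))\<^sup>2 + (1 - r\<^sup>2) * (\<Sum>m<N. (cmod (geom_conv r y m))\<^sup>2)"
  have "v \<ge> 0"
    unfolding v_def using r2 by (simp add: sum_nonneg)
  moreover have "v \<noteq> 0"
  proof
    assume "v = 0"
    then have "(cmod (geom_conv r y N))\<^sup>2 = 0" "(\<Sum>m<N. (cmod (geom_conv r y m))\<^sup>2) = 0"
      using r2 unfolding v_def by (simp_all add: add_nonneg_eq_0_iff sum_nonneg)
    then have "\<forall>m\<le>N. geom_conv r y m = 0"
      by (auto simp: sum_nonneg_eq_0_iff le_less)
    then show False
      using nonzero geom_conv_eq_0_imp_eq_0 unfolding N by (meson less_Suc_eq_le)
  qed
  ultimately show ?thesis
    unfolding N kms_form_eq_sum_squares v_def[symmetric] pos_c_def by simp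
qed

definition two_point_vec :: "nat \<Rightarrow> complex \<Rightarrow> complex vec" where
  "two_point_vec n s = vec n (\<lambda>j. if j = 0 then 1 else if j = 1 then s else 0)"

lemma two_point_vec_carrier: "two_point_vec n s \<in> carrier_vec n"
  unfolding two_point_vec_def by simp

lemma two_point_vec_nonzero:
  assumes "0 < n"
  shows "two_point_vec n s \<noteq> 0\<^sub>v n"
proof
  assume "two_point_vec n s = 0\<^sub>v n"
  then have "two_point_vec n s $ 0 = 0\<^sub>v n $ 0"
    by simp
  then show False
    using assms unfolding two_point_vec_def by simp
qed

lemma quad_form_kms_mat_two_point_vec:
  assumes n: "2 \<le> n" and "s \<in> {1, -1}"
  shows "quad_form (kms_mat n \<rho>) (two_point_vec n s) = 2 + 2 * s * \<rho>"
proof -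
  have sum_0_1: "(\<Sum>j<n. f j) = f 0 + f 1" if "\<And>j. 2 \<le> j \<Longrightarrow> j < n \<Longrightarrow> f j = 0" for f :: "nat \<Rightarrow> complex"
  proof -
    have "(\<Sum>j<n. f j) = (\<Sum>j\<in>{0, 1}. f j)"
      using n that by (intro sum.mono_neutral_right) auto
    then show ?thesis
      by simp
  qed
  have s: "cnj s = s" "s * s = 1"
    using assms(2) by auto
  have "quad_form (kms_mat n \<rho>) (two_point_vec n s) = 1 + s * \<rho> + s * \<rho> + s * s"
    using n s unfolding quad_form_def two_point_vec_def by (simp add: sum_0_1 nat_dist_def)
  then show ?thesis
    using s by simp
qed

lemma positive_definite_kms_mat_iff:
  assumes n: "2 \<le> n"
  shows "positive_definite (kms_mat n \<rho>) \<longleftrightarrow> \<rho> \<in> \<real> \<and> -1 < Re \<rho> \<and> Re \<rho> < 1"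
proof
  assume "positive_definite (kms_mat n \<rho>)"
  then have "pos_c (quad_form (kms_mat n \<rho>) (two_point_vec n s))" for s
    using n two_point_vec_carrier two_point_vec_nonzero unfolding positive_definite_def by simp
  then have "pos_c (2 + 2 * s * \<rho>)" if "s \<in> {1, -1}" for s
    using quad_form_kms_mat_two_point_vec[OF n that] by metis
  from this[of 1] this[of "-1"] show "\<rho> \<in> \<real> \<and> -1 < Re \<rho> \<and> Re \<rho> < 1"
    unfolding pos_c_def by (auto simp: complex_is_Real_iff)
next
  assume "\<rho> \<in> \<real> \<and> -1 < Re \<rho> \<and> Re \<rho> < 1"
  then obtain r where r: "\<rho> = of_real r" "\<bar>r\<bar> < 1"
    by (auto elim!: Reals_cases)
  have "pos_c (quad_form (kms_mat n \<rho>) x)" if "x \<in> carrier_vec n" "x \<noteq> 0\<^sub>v n" for x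
  proof -
    have "\<exists>j<n. x $ j \<noteq> 0"
      using that by (metis eq_vecI carrier_vecD index_zero_vec)
    then show ?thesis
      unfolding r quad_form_kms_mat_of_real[OF that(1)] using kms_form_pos[OF r(2)] by simp
  qed
  then show "positive_definite (kms_mat n \<rho>)"
    unfolding positive_definite_def using kms_mat_carrier by simp
qed

lemma positive_semidefinite_kms_mat_iff:
  assumes n: "2 \<le> n"
  shows "positive_semidefinite (kms_mat n \<rho>) \<longleftrightarrow> \<rho> \<in> \<real> \<and> -1 \<le> Re \<rho> \<and> Re \<rho> \<le> 1"
proof
  assume "positive_semidefinite (kms_mat n \<rho>)"
  then have "nonneg_c (quad_form (kms_mat n \<rho>) (two_point_vec n s))" for s
    using n two_point_vec_carrier two_point_vec_nonzero unfolding positive_semidefinite_def by simp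
  then have "nonneg_c (2 + 2 * s * \<rho>)" if "s \<in> {1, -1}" for s
    using quad_form_kms_mat_two_point_vec[OF n that] by metis
  from this[of 1] this[of "-1"] show "\<rho> \<in> \<real> \<and> -1 \<le> Re \<rho> \<and> Re \<rho> \<le> 1"
    unfolding nonneg_c_def by (auto simp: complex_is_Real_iff)
next
  assume "\<rho> \<in> \<real> \<and> -1 \<le> Re \<rho> \<and> Re \<rho> \<le> 1"
  then obtain r where r: "\<rho> = of_real r" "\<bar>r\<bar> \<le> 1"
    by (auto elim!: Reals_cases)
  then show "positive_semidefinite (kms_mat n \<rho>)"
    unfolding positive_semidefinite_def using kms_mat_carrier quad_form_kms_mat_of_real kms_form_nonneg
    by simp
qed

section \<open>Normality\<close>

lemma kms_mat_mult_index:
  "i < n \<Longrightarrow> j < n \<Longrightarrow> (kms_mat n \<sigma> * kms_mat n \<tau>) $$ (i, j) = (\<Sum>k<n. \<sigma> ^ nat_dist i k * \<tau> ^ nat_dist k j)"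
  by (simp add: scalar_prod_def atLeast0LessThan)

lemma kms_mat_2_mult_commute: "kms_mat 2 \<sigma> * kms_mat 2 \<tau> = kms_mat 2 \<tau> * kms_mat 2 \<sigma>"
proof (rule eq_matI)
  fix i j
  assume "i < dim_row (kms_mat 2 \<tau> * kms_mat 2 \<sigma>)" "j < dim_col (kms_mat 2 \<tau> * kms_mat 2 \<sigma>)"
  then have "i < 2" "j < 2"
    by simp_all
  moreover have "(\<Sum>k<2. f k) = f 0 + f 1" for f :: "nat \<Rightarrow> complex"
    by (simp add: numeral_2_eq_2)
  ultimately show "(kms_mat 2 \<sigma> * kms_mat 2 \<tau>) $$ (i, j) = (kms_mat 2 \<tau> * kms_mat 2 \<sigma>) $$ (i, j)"
    by (auto simp: kms_mat_mult_index less_2_cases_iff nat_dist_def algebra_simps simp del: index_mult_mat)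
qed auto

lemma kms_mat_commutator_0_1:
  "(kms_mat (Suc (Suc M)) \<sigma> * kms_mat (Suc (Suc M)) \<tau>) $$ (0, 1) - (kms_mat (Suc (Suc M)) \<tau> * kms_mat (Suc (Suc M)) \<sigma>) $$ (0, 1)
    = (\<Sum>k<M. (\<sigma> * \<tau>) ^ Suc k) * (\<sigma> - \<tau>)"
proof -
  define g where "g k = \<sigma> ^ nat_dist 0 k * \<tau> ^ nat_dist k 1 - \<tau> ^ nat_dist 0 k * \<sigma> ^ nat_dist k 1" for k
  have "g 0 + g 1 = 0"
    unfolding g_def by (simp add: nat_dist_def)
  moreover have "g (Suc (Suc k)) = (\<sigma> * \<tau>) ^ Suc k * (\<sigma> - \<tau>)" for k
    unfolding g_def by (simp add: nat_dist_def power_mult_distrib algebra_simps)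
  ultimately have "(\<Sum>k<Suc (Suc M). g k) = (\<Sum>k<M. (\<sigma> * \<tau>) ^ Suc k) * (\<sigma> - \<tau>)"
    unfolding sum.lessThan_Suc_shift by (simp add: sum_distrib_right add.assoc[symmetric])
  then show ?thesis
    by (simp add: kms_mat_mult_index g_def sum_subtractf del: index_mult_mat)
qed

lemma normal_kms_mat_iff:
  assumes n: "2 \<le> n"
  shows "normal_mat (kms_mat n \<rho>) \<longleftrightarrow> \<rho> \<in> \<real> \<or> n = 2"
proof
  assume "\<rho> \<in> \<real> \<or> n = 2"
  then show "normal_mat (kms_mat n \<rho>)"
    unfolding normal_mat_def adjoint_kms_mat using kms_mat_2_mult_commute by (auto simp: Reals_cnj_iff)
next
  assume normal: "normal_mat (kms_mat n \<rho>)"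
  show "\<rho> \<in> \<real> \<or> n = 2"
  proof (rule ccontr)
    assume "\<not> (\<rho> \<in> \<real> \<or> n = 2)"
    then have \<rho>: "\<rho> \<notin> \<real>" and "n \<noteq> 2"
      by auto
    define M where "M = n - 2"
    have M: "n = Suc (Suc M)" "M > 0"
      using n \<open>n \<noteq> 2\<close> unfolding M_def by auto
    define T where "T = (\<Sum>k<M. ((cmod \<rho>)\<^sup>2) ^ Suc k)"
    have "(\<Sum>k<M. (\<rho> * cnj \<rho>) ^ Suc k) * (\<rho> - cnj \<rho>) = 0"
      using normal kms_mat_commutator_0_1[of M \<rho> "cnj \<rho>"]
      unfolding normal_mat_def adjoint_kms_mat M by simp
    moreover have "(\<Sum>k<M. (\<rho> * cnj \<rho>) ^ Suc k) = of_real T"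
      unfolding T_def complex_norm_square[symmetric] of_real_sum of_real_power ..
    ultimately have "of_real T * (\<rho> - cnj \<rho>) = 0"
      by simp
    moreover have "cmod \<rho> > 0"
      using \<rho> by auto
    then have "T > 0"
      unfolding T_def using M(2) by (intro sum_pos) auto
    moreover have "\<rho> - cnj \<rho> \<noteq> 0"
      using \<rho> by (simp add: Reals_cnj_iff)
    ultimately show False
      by simp
  qed
qed

section \<open>Green's matrices\<close>

lemma greens_matrix_kms_mat_of_real:
  assumes "r \<noteq> 0"
  shows "greens_matrix (kms_mat n (of_real r))"
proof -
  \<comment> \<open>\<open>r ^ |j - k| = \<alpha> (min j k) * \<beta> (max j k)\<close> with \<open>\<alpha> j = r ^ - j\<close> and \<open>\<beta> k = r ^ k\<close>\<close>
  have "r ^ nat_dist j k = inverse r ^ min j k * r ^ max j k" for j k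
    using assms by (simp add: nat_dist_def power_diff power_inverse field_simps)
  then have "\<forall>j<n. \<forall>k<n.
      (j \<le> k \<longrightarrow> kms_mat n (of_real r) $$ (j, k) = of_real (inverse r ^ j * r ^ k)) \<and>
      (k \<le> j \<longrightarrow> kms_mat n (of_real r) $$ (j, k) = of_real (inverse r ^ k * r ^ j))"
    by (simp add: min_def max_def flip: of_real_power)
  moreover have "real_mat (kms_mat n (of_real r))"
    unfolding real_mat_def by (simp flip: of_real_power)
  ultimately show ?thesis
    unfolding greens_matrix_def using kms_mat_carrier
    by (intro conjI exI[where x = "\<lambda>j. inverse r ^ j"] exI[where x = "\<lambda>k. r ^ k"]) simp_all
qed

lemma not_greens_matrix_kms_mat_0:
  assumes "2 \<le> n"
  shows "\<not> greens_matrix (kms_mat n 0)"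
proof
  assume "greens_matrix (kms_mat n 0)"
  then obtain \<alpha> \<beta> :: "nat \<Rightarrow> real" where "\<forall>j<n. \<forall>k<n. j \<le> k \<longrightarrow> kms_mat n 0 $$ (j, k) = of_real (\<alpha> j * \<beta> k)"
    unfolding greens_matrix_def by auto
  then have entry: "of_real (\<alpha> j * \<beta> k) = (0 :: complex) ^ nat_dist j k" if "j \<le> k" "k \<le> 1" for j k
    using assms that by auto
  have "of_real (\<alpha> 0 * \<beta> 0) = (1 :: complex)" "of_real (\<alpha> 0 * \<beta> 1) = (0 :: complex)"
    "of_real (\<alpha> 1 * \<beta> 1) = (1 :: complex)"
    using entry[of 0 0] entry[of 0 1] entry[of 1 1] by (simp_all add: nat_dist_def del: of_real_mult)
  then have "\<alpha> 0 * \<beta> 0 = 1" "\<alpha> 0 * \<beta> 1 = 0" "\<alpha> 1 * \<beta> 1 = 1"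
    by (simp_all only: of_real_eq_1_iff of_real_eq_0_iff)
  then show False
    by auto
qed

lemma greens_matrix_kms_mat_iff:
  assumes "2 \<le> n"
  shows "greens_matrix (kms_mat n \<rho>) \<longleftrightarrow> \<rho> \<in> \<real> \<and> \<rho> \<noteq> 0"
proof
  assume green: "greens_matrix (kms_mat n \<rho>)"
  then have "\<rho> \<in> \<real>"
    using real_mat_kms_mat_iff[OF assms] unfolding greens_matrix_def by simp
  moreover have "\<rho> \<noteq> 0"
    using green not_greens_matrix_kms_mat_0[OF assms] by auto
  ultimately show "\<rho> \<in> \<real> \<and> \<rho> \<noteq> 0" ..
next
  assume "\<rho> \<in> \<real> \<and> \<rho> \<noteq> 0"
  then show "greens_matrix (kms_mat n \<rho>)"
    using greens_matrix_kms_mat_of_real by (auto elim!: Reals_cases)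
qed

section \<open>The symbol of the Laurent matrix\<close>

lemma symbol_partial_0 [simp]: "symbol_partial \<rho> \<theta> 0 = 1"
  unfolding symbol_partial_def by simp

lemma symbol_partial_Suc:
  "symbol_partial \<rho> \<theta> (Suc N) = symbol_partial \<rho> \<theta> N +
    \<rho> ^ Suc N * (exp (\<i> * of_real \<theta>) ^ Suc N + exp (- (\<i> * of_real \<theta>)) ^ Suc N)"
proof -
  define f where "f k = \<rho> ^ nat \<bar>k\<bar> * exp (\<i> * of_int k * of_real \<theta>)" for k :: int
  have "{- int (Suc N)..int (Suc N)} = insert (- int (Suc N)) (insert (int (Suc N)) {- int N..int N})"
    by auto
  then have "symbol_partial \<rho> \<theta> (Suc N) = f (- int (Suc N)) + (f (int (Suc N)) + symbol_partial \<rho> \<theta> N)"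
    unfolding symbol_partial_def f_def[symmetric] by simp
  moreover have "exp (\<i> * of_int (int (Suc N)) * of_real \<theta>) = exp (\<i> * of_real \<theta>) ^ Suc N"
    "exp (\<i> * of_int (- int (Suc N)) * of_real \<theta>) = exp (- (\<i> * of_real \<theta>)) ^ Suc N"
    unfolding exp_of_nat_mult[symmetric] by (simp_all add: algebra_simps)
  moreover have "nat \<bar>int (Suc N)\<bar> = Suc N" "nat \<bar>- int (Suc N)\<bar> = Suc N"
    by (simp_all only: abs_minus_cancel abs_of_nat nat_int)
  ultimately have "symbol_partial \<rho> \<theta> (Suc N) = \<rho> ^ Suc N * exp (- (\<i> * of_real \<theta>)) ^ Suc N
      + (\<rho> ^ Suc N * exp (\<i> * of_real \<theta>) ^ Suc N + symbol_partial \<rho> \<theta> N)"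
    unfolding f_def by (simp only:)
  then show ?thesis
    by (simp add: algebra_simps)
qed

lemma symbol_partial_eq_geometric:
  "symbol_partial \<rho> \<theta> N =
    1 + (\<Sum>k<N. (\<rho> * exp (\<i> * of_real \<theta>)) ^ Suc k + (\<rho> * exp (- (\<i> * of_real \<theta>))) ^ Suc k)"
  by (induction N) (simp_all add: symbol_partial_Suc power_mult_distrib algebra_simps)

lemma norm_exp_i_mult_of_real: "cmod (exp (\<i> * of_real \<theta>)) = 1" "cmod (exp (- (\<i> * of_real \<theta>))) = 1"
  by (simp_all add: norm_exp_eq_Re)

lemma convergent_symbol_partial:
  assumes "cmod \<rho> < 1"
  shows "convergent (symbol_partial \<rho> \<theta>)"
proof -
  have "summable (\<lambda>k. (\<rho> * exp (\<i> * of_real \<theta>)) ^ Suc k)" "summable (\<lambda>k. (\<rho> * exp (- (\<i> * of_real \<theta>))) ^ Suc k)"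
    unfolding summable_Suc_iff using assms by (simp_all add: summable_geometric norm_mult norm_exp_i_mult_of_real)
  then have "(\<lambda>N. 1 + (\<Sum>k<N. (\<rho> * exp (\<i> * of_real \<theta>)) ^ Suc k + (\<rho> * exp (- (\<i> * of_real \<theta>))) ^ Suc k))
      \<longlonglongrightarrow> 1 + (\<Sum>k. (\<rho> * exp (\<i> * of_real \<theta>)) ^ Suc k + (\<rho> * exp (- (\<i> * of_real \<theta>))) ^ Suc k)"
    by (intro tendsto_add tendsto_const summable_LIMSEQ summable_add)
  then show ?thesis
    unfolding convergent_def symbol_partial_eq_geometric by blast
qed

lemma norm_symbol_partial_le:
  assumes r: "cmod \<rho> < 1"
  shows "cmod (symbol_partial \<rho> \<theta> N) \<le> 1 + 2 / (1 - cmod \<rho>)"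
proof -
  have term_le: "cmod ((\<rho> * exp (\<i> * of_real \<theta>)) ^ Suc k + (\<rho> * exp (- (\<i> * of_real \<theta>))) ^ Suc k)
      \<le> 2 * cmod \<rho> ^ k" for k
  proof -
    have "cmod \<rho> ^ Suc k \<le> cmod \<rho> ^ k"
      using r by (simp add: mult_left_le_one_le)
    then show ?thesis
      by (intro order_trans[OF norm_triangle_ineq]) (simp add: norm_mult norm_power norm_exp_i_mult_of_real)
  qed
  have "(\<Sum>k<N. cmod \<rho> ^ k) \<le> (\<Sum>k. cmod \<rho> ^ k)"
    using r by (intro sum_le_suminf) (auto intro: summable_geometric)
  also have "\<dots> = 1 / (1 - cmod \<rho>)"
    using r by (simp add: suminf_geometric)
  finally have geometric: "(\<Sum>k<N. 2 * cmod \<rho> ^ k) \<le> 2 / (1 - cmod \<rho>)"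
    by (simp add: sum_distrib_left[symmetric])
  have "cmod (symbol_partial \<rho> \<theta> N)
      \<le> 1 + (\<Sum>k<N. cmod ((\<rho> * exp (\<i> * of_real \<theta>)) ^ Suc k + (\<rho> * exp (- (\<i> * of_real \<theta>))) ^ Suc k))"
    unfolding symbol_partial_eq_geometric by (rule order_trans[OF norm_triangle_ineq]) (simp add: norm_sum)
  also have "\<dots> \<le> 1 + (\<Sum>k<N. 2 * cmod \<rho> ^ k)"
    using term_le by (intro add_left_mono sum_mono)
  finally show ?thesis
    using geometric by simp
qed

lemma symbol_well_defined_bounded_of_norm_less_1:
  assumes "cmod \<rho> < 1"
  shows "symbol_well_defined_bounded \<rho>"
proof -
  have "cmod (lim (symbol_partial \<rho> \<theta>)) \<le> 1 + 2 / (1 - cmod \<rho>)" for \<theta>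
  proof (rule LIMSEQ_le_const2)
    show "(\<lambda>N. cmod (symbol_partial \<rho> \<theta> N)) \<longlonglongrightarrow> cmod (lim (symbol_partial \<rho> \<theta>))"
      using convergent_symbol_partial[OF assms] by (intro tendsto_norm) (simp add: convergent_LIMSEQ_iff)
  qed (use norm_symbol_partial_le[OF assms] in auto)
  then show ?thesis
    unfolding symbol_well_defined_bounded_def using convergent_symbol_partial[OF assms] by blast
qed

text \<open>At \<open>\<theta> = 0\<close> consecutive partial sums differ by \<open>2 \<rho> ^ (N + 1)\<close>, which does not tend to \<open>0\<close>.\<close>
lemma not_convergent_symbol_partial:
  assumes "cmod \<rho> \<ge> 1"
  shows "\<not> convergent (symbol_partial \<rho> 0)"
proof
  assume "convergent (symbol_partial \<rho> 0)"
  then obtain L where L: "symbol_partial \<rho> 0 \<longlonglongrightarrow> L"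
    unfolding convergent_def by blast
  have "(\<lambda>N. symbol_partial \<rho> 0 (Suc N) - symbol_partial \<rho> 0 N) \<longlonglongrightarrow> L - L"
    by (intro tendsto_diff L LIMSEQ_Suc)
  then have "(\<lambda>N. 2 * \<rho> ^ Suc N) \<longlonglongrightarrow> 0"
    by (simp add: symbol_partial_Suc)
  then obtain N where "cmod (2 * \<rho> ^ Suc N) < 1"
    using LIMSEQ_D[of _ 0 1] by fastforce
  moreover have "cmod \<rho> ^ Suc N \<ge> 1"
    using assms by (rule one_le_power)
  ultimately show False
    by (simp add: norm_mult norm_power)
qed

lemma symbol_well_defined_bounded_iff: "symbol_well_defined_bounded \<rho> \<longleftrightarrow> cmod \<rho> < 1"
  using symbol_well_defined_bounded_of_norm_less_1 not_convergent_symbol_partial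
  unfolding symbol_well_defined_bounded_def by (meson not_le)

theorem theorem2p3:
  fixes n :: nat and \<rho> :: complex
  assumes "n \<ge> 2"
  shows "(all_entries_positive (kms_mat n \<rho>) \<longleftrightarrow> pos_c \<rho>)
    \<and> (real_symmetric (kms_mat n \<rho>) \<longleftrightarrow> \<rho> \<in> \<real>)
    \<and> (hermitian (kms_mat n \<rho>) \<longleftrightarrow> \<rho> \<in> \<real>)
    \<and> (symbol_well_defined_bounded \<rho> \<longleftrightarrow> cmod \<rho> < 1)
    \<and> (positive_definite (kms_mat n \<rho>) \<longleftrightarrow> \<rho> \<in> \<real> \<and> -1 < Re \<rho> \<and> Re \<rho> < 1)
    \<and> (positive_semidefinite (kms_mat n \<rho>) \<longleftrightarrow> \<rho> \<in> \<real> \<and> -1 \<le> Re \<rho> \<and> Re \<rho> \<le> 1)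
    \<and> (normal_mat (kms_mat n \<rho>) \<longleftrightarrow> \<rho> \<in> \<real> \<or> n = 2)
    \<and> (greens_matrix (kms_mat n \<rho>) \<longleftrightarrow> \<rho> \<in> \<real> \<and> \<rho> \<noteq> 0)
    \<and> (totally_positive (kms_mat n \<rho>) \<longleftrightarrow> \<rho> \<in> \<real> \<and> 0 \<le> Re \<rho> \<and> Re \<rho> \<le> 1)
    \<and> (oscillatory (kms_mat n \<rho>) \<longleftrightarrow> \<rho> \<in> \<real> \<and> 0 < Re \<rho> \<and> Re \<rho> < 1)"
  using assms
  by (intro conjI all_entries_positive_kms_mat_iff real_symmetric_kms_mat_iff hermitian_kms_mat_iff
      symbol_well_defined_bounded_iff positive_definite_kms_mat_iff positive_semidefinite_kms_mat_iff
      normal_kms_mat_iff greens_matrix_kms_mat_iff totally_positive_kms_mat_iff oscillatory_kms_mat_iff)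

end
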